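(* Let $(L_i)_{i\in I}$ be a family of upper continuous lattices with zero, pairwise intersecting in $\{0\}$, and let $L=\coprod^0_{i\in I}L_i$ with each $L_i$ identified with its canonical copy in $L$. Let $\Pi=\prod_{(i,n)\in I\times\omega}L_i$ (ordered componentwise), and for a lattice term $\mathbf{p}$ with variables from $I\times\omega$ and $\vec a=(a_{i,n})\in\Pi$ let $\mathbf{p}(\vec a)\in L$ denote the value of $\mathbf{p}$ in $L$ when each variable $(i,n)$ is assigned $a_{i,n}$. Let $\Lambda$ be an upward directed poset and $(\vec a^{\lambda})_{\lambda\in\Lambda}$ an isotone family of elements of $\Pi$ with supremum $\vec a$ in $\Pi$. Then for every lattice term $\mathbf{p}$ on $I\times\omega$, $\mathbf{p}(\vec a)=\bigvee_{\lambda\in\Lambda}\mathbf{p}(\vec a^{\lambda})$ in $L$.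
   Context: $\coprod^0$ denotes the coproduct in the category of lattices with zero and zero-preserving homomorphisms; $\omega$ is the set of natural numbers. A lattice $M$ is upper continuous if for each $a\in M$ and each upward directed subset $\{x_j: j\in J\}$ of $M$ that has a join, $a\wedge\bigvee_{j}x_j=\bigvee_j(a\wedge x_j)$. *)

theory Defs
  imports "HOL-Algebra.Lattice"
begin

datatype 'v lterm = LVar 'v | LJoin "'v lterm" "'v lterm" | LMeet "'v lterm" "'v lterm"

text \<open>Value of a term under an assignment of generators to its variables
  (the result is a term over the generators, i.e. an element of the free
  construction below): this is just substitution.\<close>

abbreviation lsubst :: "('v \<Rightarrow> 'a) \<Rightarrow> 'v lterm \<Rightarrow> 'a lterm" where
  "lsubst a p \<equiv> map_lterm a p"

definition directed_in :: "('a, 'b) gorder_scheme \<Rightarrow> 'a set \<Rightarrow> bool" where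
  "directed_in M X \<longleftrightarrow> X \<noteq> {} \<and>
     (\<forall>x\<in>X. \<forall>y\<in>X. \<exists>w\<in>X. x \<sqsubseteq>\<^bsub>M\<^esub> w \<and> y \<sqsubseteq>\<^bsub>M\<^esub> w)"

definition upper_continuous :: "('a, 'b) gorder_scheme \<Rightarrow> bool" where
  "upper_continuous M \<longleftrightarrow>
     (\<forall>a\<in>carrier M. \<forall>X s. X \<subseteq> carrier M \<and> directed_in M X \<and> is_lub M s X
        \<longrightarrow> is_lub M (a \<sqinter>\<^bsub>M\<^esub> s) ((\<lambda>x. a \<sqinter>\<^bsub>M\<^esub> x) ` X))"

definition cp_gens :: "('i \<Rightarrow> 'a gorder) \<Rightarrow> 'i set \<Rightarrow> 'a \<Rightarrow> 'a set" where
  "cp_gens L I z = insert z (\<Union>i\<in>I. carrier (L i))"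

text \<open>The preorder of the lattice presented by the generators and the relations
  saying that joins and meets inside each L i are preserved.  The quotient by
  the induced equivalence is the coproduct in the category of lattices with
  zero and zero-preserving homomorphisms (z is automatically the least element).\<close>

inductive cp_le :: "('i \<Rightarrow> 'a gorder) \<Rightarrow> 'i set \<Rightarrow> 'a \<Rightarrow> 'a lterm \<Rightarrow> 'a lterm \<Rightarrow> bool"
  for L I z where
  refl: "set_lterm t \<subseteq> cp_gens L I z \<Longrightarrow> cp_le L I z t t"
| trans: "cp_le L I z s t \<Longrightarrow> cp_le L I z t u \<Longrightarrow> cp_le L I z s u"
| join_upper1: "set_lterm s \<subseteq> cp_gens L I z \<Longrightarrow> set_lterm t \<subseteq> cp_gens L I z \<Longrightarrow>
     cp_le L I z s (LJoin s t)"
| join_upper2: "set_lterm s \<subseteq> cp_gens L I z \<Longrightarrow> set_lterm t \<subseteq> cp_gens L I z \<Longrightarrow>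
     cp_le L I z t (LJoin s t)"
| join_least: "cp_le L I z s u \<Longrightarrow> cp_le L I z t u \<Longrightarrow> cp_le L I z (LJoin s t) u"
| meet_lower1: "set_lterm s \<subseteq> cp_gens L I z \<Longrightarrow> set_lterm t \<subseteq> cp_gens L I z \<Longrightarrow>
     cp_le L I z (LMeet s t) s"
| meet_lower2: "set_lterm s \<subseteq> cp_gens L I z \<Longrightarrow> set_lterm t \<subseteq> cp_gens L I z \<Longrightarrow>
     cp_le L I z (LMeet s t) t"
| meet_greatest: "cp_le L I z u s \<Longrightarrow> cp_le L I z u t \<Longrightarrow> cp_le L I z u (LMeet s t)"
| gen_join1: "i \<in> I \<Longrightarrow> x \<in> carrier (L i) \<Longrightarrow> y \<in> carrier (L i) \<Longrightarrow>
     cp_le L I z (LJoin (LVar x) (LVar y)) (LVar (x \<squnion>\<^bsub>L i\<^esub> y))"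
| gen_join2: "i \<in> I \<Longrightarrow> x \<in> carrier (L i) \<Longrightarrow> y \<in> carrier (L i) \<Longrightarrow>
     cp_le L I z (LVar (x \<squnion>\<^bsub>L i\<^esub> y)) (LJoin (LVar x) (LVar y))"
| gen_meet1: "i \<in> I \<Longrightarrow> x \<in> carrier (L i) \<Longrightarrow> y \<in> carrier (L i) \<Longrightarrow>
     cp_le L I z (LMeet (LVar x) (LVar y)) (LVar (x \<sqinter>\<^bsub>L i\<^esub> y))"
| gen_meet2: "i \<in> I \<Longrightarrow> x \<in> carrier (L i) \<Longrightarrow> y \<in> carrier (L i) \<Longrightarrow>
     cp_le L I z (LVar (x \<sqinter>\<^bsub>L i\<^esub> y)) (LMeet (LVar x) (LVar y))"

definition cp_class :: "('i \<Rightarrow> 'a gorder) \<Rightarrow> 'i set \<Rightarrow> 'a \<Rightarrow> 'a lterm \<Rightarrow> 'a lterm set" where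
  "cp_class L I z s = {t. cp_le L I z s t \<and> cp_le L I z t s}"

definition coprod0 :: "('i \<Rightarrow> 'a gorder) \<Rightarrow> 'i set \<Rightarrow> 'a \<Rightarrow> 'a lterm set gorder" where
  "coprod0 L I z =
     \<lparr> carrier = {cp_class L I z s | s. set_lterm s \<subseteq> cp_gens L I z},
       eq = (=),
       le = (\<lambda>X Y. \<exists>s\<in>X. \<exists>t\<in>Y. cp_le L I z s t) \<rparr>"

definition prodL :: "('i \<Rightarrow> 'a gorder) \<Rightarrow> 'i set \<Rightarrow> ('i \<times> nat \<Rightarrow> 'a) gorder" where
  "prodL L I =
     \<lparr> carrier = {a. (\<forall>i\<in>I. \<forall>n. a (i, n) \<in> carrier (L i)) \<and>
                     (\<forall>i n. i \<notin> I \<longrightarrow> a (i, n) = undefined)},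
       eq = (=),
       le = (\<lambda>a b. \<forall>i\<in>I. \<forall>n. a (i, n) \<sqsubseteq>\<^bsub>L i\<^esub> b (i, n)) \<rparr>"

end

(*
  In the coproduct of lattices with zero, a lattice term p has for every component i an upper
  cover p^(i), the least element of L_i above p (or none), and a lower cover p_(i), the largest
  element of L_i below p.  Both are computed recursively, and Gratzer's solution of the word
  problem describes the order of the coproduct by a Whitman-type recursion: p <= q iff
  p^(i) <= q_(i) for some i, or p is a join of two terms below q, or a meet with one factor
  below q, or q is a meet of two terms above p, or a join with one joinand above p.

  Along the directed family of assignments a^l with supremum a, the upper covers of p(a^l)
  converge to those of p(a), with "no upper cover" acting as a compact top: for joins this is
  immediate, for meets it is the upper continuity of the L_i, together with the fact that a meet
  collapsing to zero already does so in one of the finitely many components that occur in p.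
  If now p(a^l) <= q for all l, then one of the finitely many reasons for this inequality holds
  for cofinally many l, and by induction on p and q the same reason yields p(a) <= q.
*)

theory Submission
  imports Defs
begin

(* L_i extended by a top element, represented by None *)
fun le_opt :: "('a, 'b) gorder_scheme \<Rightarrow> 'a option \<Rightarrow> 'a option \<Rightarrow> bool" where
  "le_opt M x None = True"
| "le_opt M None (Some y) = False"
| "le_opt M (Some x) (Some y) = (x \<sqsubseteq>\<^bsub>M\<^esub> y)"

fun join_opt :: "('a, 'b) gorder_scheme \<Rightarrow> 'a option \<Rightarrow> 'a option \<Rightarrow> 'a option" where
  "join_opt M (Some x) (Some y) = Some (x \<squnion>\<^bsub>M\<^esub> y)"
| "join_opt M _ _ = None"

fun meet_opt :: "('a, 'b) gorder_scheme \<Rightarrow> 'a option \<Rightarrow> 'a option \<Rightarrow> 'a option" where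
  "meet_opt M None y = y"
| "meet_opt M x None = x"
| "meet_opt M (Some x) (Some y) = Some (x \<sqinter>\<^bsub>M\<^esub> y)"

lemma le_None_opt_iff [simp]: "le_opt M None y \<longleftrightarrow> y = None"
  by (cases y) auto

lemma join_opt_None_iff [simp]: "join_opt M x y = None \<longleftrightarrow> x = None \<or> y = None"
  by (cases x; cases y) auto

lemma meet_opt_commute: "meet_opt M x y = meet_opt M y x"
  by (cases x; cases y) (auto simp: meet_comm)

context lattice
begin

lemma join_mono:
  "\<lbrakk>x \<sqsubseteq> x'; y \<sqsubseteq> y'; x \<in> carrier L; y \<in> carrier L; x' \<in> carrier L; y' \<in> carrier L\<rbrakk>
   \<Longrightarrow> x \<squnion> y \<sqsubseteq> x' \<squnion> y'"
  by (meson join_closed join_le join_left join_right le_trans)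

lemma meet_mono:
  "\<lbrakk>x \<sqsubseteq> x'; y \<sqsubseteq> y'; x \<in> carrier L; y \<in> carrier L; x' \<in> carrier L; y' \<in> carrier L\<rbrakk>
   \<Longrightarrow> x \<sqinter> y \<sqsubseteq> x' \<sqinter> y'"
  by (meson meet_closed meet_le meet_left meet_right le_trans)

lemma le_opt_trans:
  "\<lbrakk>le_opt L x y; le_opt L y w; set_option x \<subseteq> carrier L; set_option y \<subseteq> carrier L;
    set_option w \<subseteq> carrier L\<rbrakk> \<Longrightarrow> le_opt L x w"
  by (cases x; cases y; cases w) (auto intro: le_trans)

lemma join_opt_closed:
  "\<lbrakk>set_option x \<subseteq> carrier L; set_option y \<subseteq> carrier L\<rbrakk> \<Longrightarrow> set_option (join_opt L x y) \<subseteq> carrier L"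
  by (cases x; cases y) auto

lemma meet_opt_closed:
  "\<lbrakk>set_option x \<subseteq> carrier L; set_option y \<subseteq> carrier L\<rbrakk> \<Longrightarrow> set_option (meet_opt L x y) \<subseteq> carrier L"
  by (cases x; cases y) auto

lemma join_opt_left:
  "\<lbrakk>set_option x \<subseteq> carrier L; set_option y \<subseteq> carrier L\<rbrakk> \<Longrightarrow> le_opt L x (join_opt L x y)"
  by (cases x; cases y) (auto intro: join_left)

lemma join_opt_right:
  "\<lbrakk>set_option x \<subseteq> carrier L; set_option y \<subseteq> carrier L\<rbrakk> \<Longrightarrow> le_opt L y (join_opt L x y)"
  by (cases x; cases y) (auto intro: join_right)

lemma join_opt_le:
  "\<lbrakk>le_opt L x w; le_opt L y w; set_option x \<subseteq> carrier L; set_option y \<subseteq> carrier L;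
    set_option w \<subseteq> carrier L\<rbrakk> \<Longrightarrow> le_opt L (join_opt L x y) w"
  by (cases x; cases y; cases w) (auto intro: join_le)

lemma meet_opt_left:
  "\<lbrakk>set_option x \<subseteq> carrier L; set_option y \<subseteq> carrier L\<rbrakk> \<Longrightarrow> le_opt L (meet_opt L x y) x"
  by (cases x; cases y) (auto intro: meet_left)

lemma meet_opt_right:
  "\<lbrakk>set_option x \<subseteq> carrier L; set_option y \<subseteq> carrier L\<rbrakk> \<Longrightarrow> le_opt L (meet_opt L x y) y"
  by (cases x; cases y) (auto intro: meet_right)

lemma meet_opt_le:
  "\<lbrakk>le_opt L w x; le_opt L w y; set_option x \<subseteq> carrier L; set_option y \<subseteq> carrier L;
    set_option w \<subseteq> carrier L\<rbrakk> \<Longrightarrow> le_opt L w (meet_opt L x y)"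
  by (cases x; cases y; cases w) (auto intro: meet_le)

lemma join_opt_le_iff:
  "\<lbrakk>set_option x \<subseteq> carrier L; set_option y \<subseteq> carrier L; set_option w \<subseteq> carrier L\<rbrakk>
   \<Longrightarrow> le_opt L (join_opt L x y) w \<longleftrightarrow> le_opt L x w \<and> le_opt L y w"
  by (meson join_opt_closed join_opt_le join_opt_left join_opt_right le_opt_trans)

lemma le_meet_opt_iff:
  "\<lbrakk>set_option x \<subseteq> carrier L; set_option y \<subseteq> carrier L; set_option w \<subseteq> carrier L\<rbrakk>
   \<Longrightarrow> le_opt L w (meet_opt L x y) \<longleftrightarrow> le_opt L w x \<and> le_opt L w y"
  by (meson meet_opt_closed meet_opt_le meet_opt_left meet_opt_right le_opt_trans)

lemma meet_opt_leI1:
  "\<lbrakk>le_opt L x w; set_option x \<subseteq> carrier L; set_option y \<subseteq> carrier L; set_option w \<subseteq> carrier L\<rbrakk>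
   \<Longrightarrow> le_opt L (meet_opt L x y) w"
  by (meson meet_opt_closed meet_opt_left le_opt_trans)

lemma meet_opt_leI2:
  "\<lbrakk>le_opt L y w; set_option x \<subseteq> carrier L; set_option y \<subseteq> carrier L; set_option w \<subseteq> carrier L\<rbrakk>
   \<Longrightarrow> le_opt L (meet_opt L x y) w"
  by (meson meet_opt_closed meet_opt_right le_opt_trans)

lemma join_opt_mono:
  "\<lbrakk>le_opt L x x'; le_opt L y y'; set_option x \<subseteq> carrier L; set_option y \<subseteq> carrier L;
    set_option x' \<subseteq> carrier L; set_option y' \<subseteq> carrier L\<rbrakk>
   \<Longrightarrow> le_opt L (join_opt L x y) (join_opt L x' y')"
  by (cases x; cases y; cases x'; cases y') (auto intro: join_mono)

lemma meet_opt_mono: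
  "\<lbrakk>le_opt L x x'; le_opt L y y'; set_option x \<subseteq> carrier L; set_option y \<subseteq> carrier L;
    set_option x' \<subseteq> carrier L; set_option y' \<subseteq> carrier L\<rbrakk>
   \<Longrightarrow> le_opt L (meet_opt L x y) (meet_opt L x' y')"
  by (cases x; cases y; cases x'; cases y') (auto intro: meet_mono meet_left meet_right le_trans)

end

lemma directed_in_image:
  fixes u :: "'l::order \<Rightarrow> 'a"
  assumes "S \<noteq> {}" and "\<And>l m. l \<in> S \<Longrightarrow> m \<in> S \<Longrightarrow> \<exists>s\<in>S. l \<le> s \<and> m \<le> s"
    and "\<And>l m. l \<in> S \<Longrightarrow> m \<in> S \<Longrightarrow> l \<le> m \<Longrightarrow> u l \<sqsubseteq>\<^bsub>M\<^esub> u m"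
  shows "directed_in M (u ` S)"
proof -
  have "\<exists>w\<in>u ` S. u l \<sqsubseteq>\<^bsub>M\<^esub> w \<and> u m \<sqsubseteq>\<^bsub>M\<^esub> w" if "l \<in> S" "m \<in> S" for l m
    using assms(2)[OF that] assms(3) that by blast
  then show ?thesis unfolding directed_in_def using assms(1) by blast
qed

lemma upper_continuousD:
  "\<lbrakk>upper_continuous M; a \<in> carrier M; X \<subseteq> carrier M; directed_in M X; is_lub M s X\<rbrakk>
   \<Longrightarrow> is_lub M (a \<sqinter>\<^bsub>M\<^esub> s) ((\<lambda>x. a \<sqinter>\<^bsub>M\<^esub> x) ` X)"
  unfolding upper_continuous_def by blast

lemma (in lattice) meet_lub_lub_le:
  fixes u v :: "'l::order \<Rightarrow> 'a"
  assumes uc: "upper_continuous L"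
    and S: "S \<noteq> {}" "\<And>l m. l \<in> S \<Longrightarrow> m \<in> S \<Longrightarrow> \<exists>s\<in>S. l \<le> s \<and> m \<le> s"
    and u: "\<And>l. l \<in> S \<Longrightarrow> u l \<in> carrier L" "\<And>l m. l \<in> S \<Longrightarrow> m \<in> S \<Longrightarrow> l \<le> m \<Longrightarrow> u l \<sqsubseteq> u m"
      "is_lub L u0 (u ` S)"
    and v: "\<And>l. l \<in> S \<Longrightarrow> v l \<in> carrier L" "\<And>l m. l \<in> S \<Longrightarrow> m \<in> S \<Longrightarrow> l \<le> m \<Longrightarrow> v l \<sqsubseteq> v m"
      "is_lub L v0 (v ` S)"
    and d: "d \<in> carrier L" and le_d: "\<And>s. s \<in> S \<Longrightarrow> u s \<sqinter> v s \<sqsubseteq> d"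
  shows "u0 \<sqinter> v0 \<sqsubseteq> d"
proof -
  have meet_lub: "is_lub L (x \<sqinter> w0) ((\<lambda>y. x \<sqinter> y) ` w ` S)"
    if "x \<in> carrier L" "\<And>l. l \<in> S \<Longrightarrow> w l \<in> carrier L"
      "\<And>l m. l \<in> S \<Longrightarrow> m \<in> S \<Longrightarrow> l \<le> m \<Longrightarrow> w l \<sqsubseteq> w m" "is_lub L w0 (w ` S)"
    for x w w0
  proof (rule upper_continuousD[OF uc that(1) _ _ that(4)])
    show "w ` S \<subseteq> carrier L" using that(2) by blast
    show "directed_in L (w ` S)" by (rule directed_in_image[OF S that(3)])
  qed
  have u0_v: "u0 \<sqinter> v l \<sqsubseteq> d" if l: "l \<in> S" for l
  proof -
    have "v l \<sqinter> u m \<sqsubseteq> d" if m: "m \<in> S" for m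
    proof -
      obtain s where s: "s \<in> S" "l \<le> s" "m \<le> s" using S(2)[OF l m] by blast
      have "v l \<sqinter> u m \<sqsubseteq> v s \<sqinter> u s"
        by (rule meet_mono) (use l m s u v in auto)
      moreover have "v s \<sqinter> u s \<sqsubseteq> d" using le_d[OF s(1)] by (simp add: meet_comm)
      ultimately show ?thesis
        by (rule le_trans) (use l m s u(1) v(1) d in auto)
    qed
    then have "v l \<sqinter> u0 \<sqsubseteq> d"
      by (intro least_le[OF meet_lub[OF v(1)[OF l] u]] Upper_memI) (auto simp: d)
    then show ?thesis by (simp add: meet_comm)
  qed
  show ?thesis
    by (intro least_le[OF meet_lub[OF least_closed[OF u(3)] v]] Upper_memI) (auto simp: d u0_v)
qed

lemma set_lterm_nonempty: "set_lterm p \<noteq> {}"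
  by (induction p) auto

definition cofinal :: "'l::order set \<Rightarrow> 'l set \<Rightarrow> bool" where
  "cofinal \<Lambda> S \<longleftrightarrow> S \<subseteq> \<Lambda> \<and> (\<forall>l\<in>\<Lambda>. \<exists>s\<in>S. l \<le> s)"

definition eventually_in :: "'l::order set \<Rightarrow> ('l \<Rightarrow> bool) \<Rightarrow> bool" where
  "eventually_in \<Lambda> P \<longleftrightarrow> (\<exists>l0\<in>\<Lambda>. \<forall>l\<in>\<Lambda>. l0 \<le> l \<longrightarrow> P l)"

lemma eventually_in_mono: "eventually_in \<Lambda> P \<Longrightarrow> (\<And>l. P l \<Longrightarrow> Q l) \<Longrightarrow> eventually_in \<Lambda> Q"
  unfolding eventually_in_def by blast

locale directed_set =
  fixes \<Lambda> :: "'l::order set"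
  assumes nonempty: "\<Lambda> \<noteq> {}"
    and directed: "\<And>l m. l \<in> \<Lambda> \<Longrightarrow> m \<in> \<Lambda> \<Longrightarrow> \<exists>k\<in>\<Lambda>. l \<le> k \<and> m \<le> k"
begin

lemma cofinal_self: "cofinal \<Lambda> \<Lambda>"
  unfolding cofinal_def by auto

lemma cofinal_nonempty: "cofinal \<Lambda> S \<Longrightarrow> S \<noteq> {}"
  unfolding cofinal_def using nonempty by blast

lemma cofinal_upper_bound: "cofinal \<Lambda> S \<Longrightarrow> l \<in> \<Lambda> \<Longrightarrow> m \<in> \<Lambda> \<Longrightarrow> \<exists>s\<in>S. l \<le> s \<and> m \<le> s"
  unfolding cofinal_def by (meson directed order_trans)

lemma cofinal_eventually_in: "cofinal \<Lambda> S \<Longrightarrow> eventually_in \<Lambda> P \<Longrightarrow> cofinal \<Lambda> {s\<in>S. P s}"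
  unfolding eventually_in_def cofinal_def by (smt (verit) directed mem_Collect_eq order_trans subset_iff)

lemma cofinal_if_not_eventually_in: "\<not> eventually_in \<Lambda> (\<lambda>l. \<not> P l) \<Longrightarrow> cofinal \<Lambda> {l\<in>\<Lambda>. P l}"
  unfolding eventually_in_def cofinal_def by auto

lemma eventually_in_conj:
  "eventually_in \<Lambda> P \<Longrightarrow> eventually_in \<Lambda> Q \<Longrightarrow> eventually_in \<Lambda> (\<lambda>l. P l \<and> Q l)"
  unfolding eventually_in_def by (meson directed order_trans)

lemma cofinal_disjE:
  assumes "cofinal \<Lambda> S" "\<And>s. s \<in> S \<Longrightarrow> P s \<or> Q s"
  shows "cofinal \<Lambda> {s\<in>S. P s} \<or> cofinal \<Lambda> {s\<in>S. Q s}"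
proof (rule ccontr)
  assume "\<not> ?thesis"
  then obtain l m where "l \<in> \<Lambda>" "m \<in> \<Lambda>" "\<forall>s\<in>S. P s \<longrightarrow> \<not> l \<le> s" "\<forall>s\<in>S. Q s \<longrightarrow> \<not> m \<le> s"
    using assms(1) unfolding cofinal_def by auto
  then show False using cofinal_upper_bound[OF assms(1)] assms(2) by blast
qed

lemma cofinal_bexE:
  assumes "finite C" "cofinal \<Lambda> S" "\<And>s. s \<in> S \<Longrightarrow> \<exists>c\<in>C. P c s"
  shows "\<exists>c\<in>C. cofinal \<Lambda> {s\<in>S. P c s}"
  using assms
proof (induction C arbitrary: S rule: finite_induct)
  case empty
  then show ?case using cofinal_nonempty by auto
next
  case (insert c C)
  then have "cofinal \<Lambda> {s\<in>S. P c s} \<or> cofinal \<Lambda> {s\<in>S. \<exists>c'\<in>C. P c' s}"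
    by (intro cofinal_disjE) auto
  then show ?case
  proof
    assume "cofinal \<Lambda> {s\<in>S. \<exists>c'\<in>C. P c' s}"
    then obtain c' where "c' \<in> C" "cofinal \<Lambda> {s\<in>{s\<in>S. \<exists>c'\<in>C. P c' s}. P c' s}"
      using insert.IH by blast
    moreover have "{s\<in>{s\<in>S. \<exists>c'\<in>C. P c' s}. P c' s} = {s\<in>S. P c' s}" using \<open>c' \<in> C\<close> by blast
    ultimately show ?thesis by auto
  qed auto
qed

lemma cofinal_disj3E:
  assumes S: "cofinal \<Lambda> S" and cases: "\<And>s. s \<in> S \<Longrightarrow> P s \<or> Q s \<or> R s"
  obtains T where "cofinal \<Lambda> T" "\<And>s. s \<in> T \<Longrightarrow> P s"
    | T where "cofinal \<Lambda> T" "\<And>s. s \<in> T \<Longrightarrow> Q s"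
    | T where "cofinal \<Lambda> T" "\<And>s. s \<in> T \<Longrightarrow> R s"
proof -
  have "cofinal \<Lambda> {s\<in>S. P s} \<or> cofinal \<Lambda> {s\<in>S. Q s \<or> R s}" using cofinal_disjE[OF S cases] .
  then show thesis
  proof (elim disjE)
    assume "cofinal \<Lambda> {s\<in>S. Q s \<or> R s}"
    then have "cofinal \<Lambda> {s\<in>{s\<in>S. Q s \<or> R s}. Q s} \<or> cofinal \<Lambda> {s\<in>{s\<in>S. Q s \<or> R s}. R s}"
      by (rule cofinal_disjE) simp
    then show thesis by (elim disjE) (auto intro: that(2,3))
  qed (auto intro: that(1))
qed

end

locale lattice_family =
  fixes L :: "'i \<Rightarrow> 'a gorder" and I :: "'i set" and z :: 'a
  assumes lattice_L: "\<And>i. i \<in> I \<Longrightarrow> lattice (L i)"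
    and zero_closed: "\<And>i. i \<in> I \<Longrightarrow> z \<in> carrier (L i)"
    and zero_least: "\<And>i x. i \<in> I \<Longrightarrow> x \<in> carrier (L i) \<Longrightarrow> z \<sqsubseteq>\<^bsub>L i\<^esub> x"
    and carrier_Int: "\<And>i j. i \<in> I \<Longrightarrow> j \<in> I \<Longrightarrow> i \<noteq> j \<Longrightarrow> carrier (L i) \<inter> carrier (L j) = {z}"
    and index_nonempty: "I \<noteq> {}"
begin

context
  fixes i assumes i: "i \<in> I"
begin

interpretation Li: lattice "L i" by (rule lattice_L[OF i])

lemmas L_join_closed = Li.join_closed and L_meet_closed = Li.meet_closed
  and L_le_refl = Li.le_refl and L_le_trans = Li.le_trans and L_le_antisym = Li.le_antisym
  and L_join_left = Li.join_left and L_join_right = Li.join_right and L_join_le = Li.join_le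
  and L_meet_left = Li.meet_left and L_meet_right = Li.meet_right and L_meet_le = Li.meet_le
  and L_le_opt_trans = Li.le_opt_trans
  and L_join_opt_closed = Li.join_opt_closed and L_meet_opt_closed = Li.meet_opt_closed
  and L_join_opt_left = Li.join_opt_left and L_join_opt_right = Li.join_opt_right
  and L_meet_opt_left = Li.meet_opt_left
  and L_meet_opt_right = Li.meet_opt_right and L_meet_opt_le = Li.meet_opt_le
  and L_join_opt_le_iff = Li.join_opt_le_iff and L_le_meet_opt_iff = Li.le_meet_opt_iff
  and L_meet_opt_leI1 = Li.meet_opt_leI1 and L_meet_opt_leI2 = Li.meet_opt_leI2
  and L_join_opt_mono = Li.join_opt_mono and L_meet_opt_mono = Li.meet_opt_mono
  and L_meet_lub_lub_le = Li.meet_lub_lub_le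

end

lemma L_le_zero_iff: "i \<in> I \<Longrightarrow> x \<in> carrier (L i) \<Longrightarrow> x \<sqsubseteq>\<^bsub>L i\<^esub> z \<longleftrightarrow> x = z"
  by (meson L_le_antisym L_le_refl zero_closed zero_least)

(* A meet that lies below zero in one component is zero in the coproduct. *)
primrec upper_cover :: "'a lterm \<Rightarrow> 'i \<Rightarrow> 'a option" where
  "upper_cover (LVar x) = (\<lambda>i. if x \<in> carrier (L i) then Some x else None)"
| "upper_cover (LJoin p q) = (\<lambda>i. join_opt (L i) (upper_cover p i) (upper_cover q i))"
| "upper_cover (LMeet p q) =
     (if \<exists>k\<in>I. le_opt (L k) (meet_opt (L k) (upper_cover p k) (upper_cover q k)) (Some z)
      then (\<lambda>i. Some z) else (\<lambda>i. meet_opt (L i) (upper_cover p i) (upper_cover q i)))"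

primrec lower_cover :: "'a lterm \<Rightarrow> 'i \<Rightarrow> 'a" where
  "lower_cover (LVar x) = (\<lambda>i. if x \<in> carrier (L i) then x else z)"
| "lower_cover (LJoin p q) = (\<lambda>i. lower_cover p i \<squnion>\<^bsub>L i\<^esub> lower_cover q i)"
| "lower_cover (LMeet p q) = (\<lambda>i. lower_cover p i \<sqinter>\<^bsub>L i\<^esub> lower_cover q i)"

lemma upper_cover_closed [simp]: "i \<in> I \<Longrightarrow> set_option (upper_cover p i) \<subseteq> carrier (L i)"
  by (induction p) (auto simp: zero_closed L_join_opt_closed L_meet_opt_closed)

lemma lower_cover_closed [simp]: "i \<in> I \<Longrightarrow> lower_cover p i \<in> carrier (L i)"
  by (induction p) (auto simp: zero_closed L_join_closed L_meet_closed)

lemma zero_le_upper_cover: "i \<in> I \<Longrightarrow> le_opt (L i) (Some z) (upper_cover p i)"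
proof (induction p)
  case (LJoin p q)
  then show ?case
    using L_le_opt_trans[OF \<open>i \<in> I\<close> LJoin.IH(1) L_join_opt_left] by (simp add: zero_closed L_join_opt_closed)
next
  case (LMeet p q)
  then show ?case by (auto simp: zero_closed L_le_refl L_meet_opt_le)
qed (auto simp: zero_least)

lemma upper_cover_le_zero_transfer:
  assumes "k \<in> I" "k' \<in> I" "le_opt (L k) (upper_cover p k) (Some z)"
  shows "le_opt (L k') (upper_cover p k') (Some z)"
  using assms(3)
proof (induction p)
  case (LVar x)
  then have "x = z" using \<open>k \<in> I\<close> by (auto simp: L_le_zero_iff split: if_splits)
  then show ?case using \<open>k' \<in> I\<close> by (simp add: zero_closed L_le_refl)
next
  case (LJoin p q)
  then show ?case using assms(1,2) by (simp add: zero_closed L_join_opt_le_iff)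
next
  case (LMeet p q)
  then show ?case using \<open>k \<in> I\<close> \<open>k' \<in> I\<close> by (auto simp: zero_closed L_le_refl split: if_splits)
qed

lemma L_join_eq_zero_iff:
  "i \<in> I \<Longrightarrow> x \<in> carrier (L i) \<Longrightarrow> y \<in> carrier (L i) \<Longrightarrow> x \<squnion>\<^bsub>L i\<^esub> y = z \<longleftrightarrow> x = z \<and> y = z"
  by (metis L_join_closed L_join_le L_join_left L_join_right L_le_zero_iff zero_closed)

lemma L_meet_zero_left [simp]: "i \<in> I \<Longrightarrow> y \<in> carrier (L i) \<Longrightarrow> z \<sqinter>\<^bsub>L i\<^esub> y = z"
  by (meson L_le_zero_iff L_meet_closed L_meet_left zero_closed)

lemma L_meet_zero_right [simp]: "i \<in> I \<Longrightarrow> x \<in> carrier (L i) \<Longrightarrow> x \<sqinter>\<^bsub>L i\<^esub> z = z"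
  by (meson L_le_zero_iff L_meet_closed L_meet_right zero_closed)

lemma lower_le_upper_cover_and_upper_cover_None:
  "(\<forall>i\<in>I. le_opt (L i) (Some (lower_cover q i)) (upper_cover q i)) \<and>
   (\<forall>i\<in>I. \<forall>j\<in>I. i \<noteq> j \<longrightarrow> lower_cover q j \<noteq> z \<longrightarrow> upper_cover q i = None)"
proof (induction q)
  case (LVar x)
  show ?case using carrier_Int by (auto simp: L_le_refl)
next
  case (LJoin p q)
  have "le_opt (L i) (Some (lower_cover (LJoin p q) i)) (upper_cover (LJoin p q) i)" if "i \<in> I" for i
    using L_join_opt_mono[OF that, of "Some (lower_cover p i)" _ "Some (lower_cover q i)"] LJoin.IH that
    by simp
  moreover have "upper_cover (LJoin p q) i = None"
    if "i \<in> I" "j \<in> I" "i \<noteq> j" "lower_cover (LJoin p q) j \<noteq> z" for i j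
    using that LJoin.IH by (auto simp: L_join_eq_zero_iff)
  ultimately show ?case by blast
next
  case (LMeet p q)
  define w where "w k = meet_opt (L k) (upper_cover p k) (upper_cover q k)" for k
  have lower_le_w: "le_opt (L k) (Some (lower_cover (LMeet p q) k)) (w k)" if "k \<in> I" for k
    using L_meet_opt_mono[OF that, of "Some (lower_cover p k)" _ "Some (lower_cover q k)"] LMeet.IH that
    by (simp add: w_def)
  have w_closed: "set_option (w k) \<subseteq> carrier (L k)" if "k \<in> I" for k
    using that by (simp add: w_def L_meet_opt_closed)
  have w_None: "w k = None" if "k \<in> I" "j \<in> I" "k \<noteq> j" "lower_cover (LMeet p q) j \<noteq> z" for k j
  proof -
    have "lower_cover p j \<noteq> z" "lower_cover q j \<noteq> z"
      using that(2,4) by auto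
    then show ?thesis using that LMeet.IH by (simp add: w_def)
  qed
  have w_le_zero: "lower_cover (LMeet p q) i = z"
    if "i \<in> I" "k \<in> I" "le_opt (L k) (w k) (Some z)" for i k
  proof (cases "k = i")
    case True
    then have "le_opt (L i) (Some (lower_cover (LMeet p q) i)) (Some z)"
      using L_le_opt_trans[OF that(1) lower_le_w[OF that(1)], of "Some z"] True that w_closed[OF that(1)]
      by (simp add: zero_closed L_meet_closed)
    then show ?thesis using that(1) by (simp add: L_le_zero_iff L_meet_closed)
  qed (metis w_None[OF that(2,1)] that(3) le_None_opt_iff option.distinct(1))
  have "le_opt (L i) (Some (lower_cover (LMeet p q) i)) (upper_cover (LMeet p q) i)" if "i \<in> I" for i
    using lower_le_w[OF that] w_le_zero[OF that] that
    by (auto simp: w_def[symmetric] zero_closed L_le_refl)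
  moreover have "upper_cover (LMeet p q) i = None"
    if "i \<in> I" "j \<in> I" "i \<noteq> j" "lower_cover (LMeet p q) j \<noteq> z" for i j
    using w_None[OF that] w_le_zero[OF that(2)] that(4) by (auto simp: w_def[symmetric])
  ultimately show ?case by blast
qed

lemma lower_le_upper_cover: "i \<in> I \<Longrightarrow> le_opt (L i) (Some (lower_cover q i)) (upper_cover q i)"
  using lower_le_upper_cover_and_upper_cover_None by blast

lemma upper_cover_None:
  "i \<in> I \<Longrightarrow> j \<in> I \<Longrightarrow> i \<noteq> j \<Longrightarrow> lower_cover q j \<noteq> z \<Longrightarrow> upper_cover q i = None"
  using lower_le_upper_cover_and_upper_cover_None by blast

lemma cover_le_imp_upper_cover_le:
  assumes j: "j \<in> I" and le: "le_opt (L j) (upper_cover p j) (Some (lower_cover q j))" and i: "i \<in> I"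
  shows "le_opt (L i) (upper_cover p i) (upper_cover q i)"
proof (cases "le_opt (L j) (upper_cover p j) (Some z)")
  case True
  then have "le_opt (L i) (upper_cover p i) (Some z)" by (rule upper_cover_le_zero_transfer[OF j i])
  then show ?thesis
    using L_le_opt_trans[OF i _ zero_le_upper_cover[OF i]] i by (simp add: zero_closed)
next
  case False
  then have "lower_cover q j \<noteq> z" using le by auto
  then show ?thesis
  proof (cases "i = j")
    case True
    then show ?thesis using L_le_opt_trans[OF j le lower_le_upper_cover[OF j]] j by simp
  qed (simp add: upper_cover_None[OF i j])
qed

lemma cover_le_imp_lower_cover_le:
  assumes j: "j \<in> I" and le: "le_opt (L j) (upper_cover p j) (Some (lower_cover q j))" and i: "i \<in> I"
  shows "lower_cover p i \<sqsubseteq>\<^bsub>L i\<^esub> lower_cover q i"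
proof (cases "i = j")
  case True
  then show ?thesis using L_le_opt_trans[OF j lower_le_upper_cover[OF j] le] j by simp
next
  case False
  show ?thesis
  proof (cases "lower_cover p i = z")
    case True
    then show ?thesis using i zero_least by (metis lower_cover_closed)
  next
    case False
    then show ?thesis using upper_cover_None[OF j i \<open>i \<noteq> j\<close>[symmetric]] le by simp
  qed
qed

definition meet_vanishes :: "'a lterm \<Rightarrow> 'a lterm \<Rightarrow> bool" where
  "meet_vanishes p q \<longleftrightarrow>
     (\<exists>k\<in>I. le_opt (L k) (meet_opt (L k) (upper_cover p k) (upper_cover q k)) (Some z))"

lemma upper_cover_LMeet:
  "upper_cover (LMeet p q) i =
     (if meet_vanishes p q then Some z else meet_opt (L i) (upper_cover p i) (upper_cover q i))"
  by (simp add: meet_vanishes_def)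

lemma meet_vanishesE:
  assumes "meet_vanishes p q"
  obtains k where "k \<in> I" "meet_opt (L k) (upper_cover p k) (upper_cover q k) = Some z"
proof -
  obtain k where k: "k \<in> I" and le: "le_opt (L k) (meet_opt (L k) (upper_cover p k) (upper_cover q k)) (Some z)"
    using assms unfolding meet_vanishes_def by blast
  moreover have "set_option (meet_opt (L k) (upper_cover p k) (upper_cover q k)) \<subseteq> carrier (L k)"
    using k by (simp add: L_meet_opt_closed)
  ultimately show thesis
    using that by (cases "meet_opt (L k) (upper_cover p k) (upper_cover q k)") (auto simp: L_le_zero_iff)
qed

declare upper_cover.simps(3) [simp del]

(* Gratzer's description of the order of the coproduct; see cp_le_iff_wle. *)
inductive wle :: "'a lterm \<Rightarrow> 'a lterm \<Rightarrow> bool" where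
  cover: "i \<in> I \<Longrightarrow> le_opt (L i) (upper_cover p i) (Some (lower_cover q i)) \<Longrightarrow> wle p q"
| join_left: "wle p0 q \<Longrightarrow> wle p1 q \<Longrightarrow> wle (LJoin p0 p1) q"
| meet_left1: "wle p0 q \<Longrightarrow> wle (LMeet p0 p1) q"
| meet_left2: "wle p1 q \<Longrightarrow> wle (LMeet p0 p1) q"
| meet_right: "wle p q0 \<Longrightarrow> wle p q1 \<Longrightarrow> wle p (LMeet q0 q1)"
| join_right1: "wle p q0 \<Longrightarrow> wle p (LJoin q0 q1)"
| join_right2: "wle p q1 \<Longrightarrow> wle p (LJoin q0 q1)"

lemma upper_cover_meet_le:
  assumes "i \<in> I"
  shows "le_opt (L i) (upper_cover (LMeet p0 p1) i) (upper_cover p0 i)"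
    and "le_opt (L i) (upper_cover (LMeet p0 p1) i) (upper_cover p1 i)"
  using assms zero_le_upper_cover[OF assms]
  by (auto simp: upper_cover_LMeet L_meet_opt_left L_meet_opt_right)

lemma le_upper_cover_meet:
  assumes "\<And>k. k \<in> I \<Longrightarrow> le_opt (L k) (upper_cover p k) (upper_cover q0 k)"
    and "\<And>k. k \<in> I \<Longrightarrow> le_opt (L k) (upper_cover p k) (upper_cover q1 k)" and i: "i \<in> I"
  shows "le_opt (L i) (upper_cover p i) (upper_cover (LMeet q0 q1) i)"
proof (cases "meet_vanishes q0 q1")
  case True
  then obtain k where k: "k \<in> I"
    and meet_le: "le_opt (L k) (meet_opt (L k) (upper_cover q0 k) (upper_cover q1 k)) (Some z)"
    unfolding meet_vanishes_def by blast
  have "le_opt (L k) (upper_cover p k) (meet_opt (L k) (upper_cover q0 k) (upper_cover q1 k))"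
    using assms(1,2)[OF k] k by (simp add: L_le_meet_opt_iff)
  then have "le_opt (L k) (upper_cover p k) (Some z)"
    using L_le_opt_trans[OF k _ meet_le] k by (simp add: zero_closed L_meet_opt_closed)
  then show ?thesis using upper_cover_le_zero_transfer[OF k i] True by (simp add: upper_cover_LMeet)
qed (use assms in \<open>simp add: upper_cover_LMeet L_le_meet_opt_iff\<close>)

lemma wle_imp_upper_cover_le: "wle p q \<Longrightarrow> i \<in> I \<Longrightarrow> le_opt (L i) (upper_cover p i) (upper_cover q i)"
proof (induction arbitrary: i rule: wle.induct)
  case (cover j p q)
  then show ?case by (rule cover_le_imp_upper_cover_le)
next
  case (join_left p0 q p1)
  then show ?case by (simp add: L_join_opt_le_iff)
next
  case (meet_left1 p0 q p1)
  then show ?case using L_le_opt_trans[OF _ upper_cover_meet_le(1)] by simp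
next
  case (meet_left2 p1 q p0)
  then show ?case using L_le_opt_trans[OF _ upper_cover_meet_le(2)] by simp
next
  case (meet_right p q0 q1)
  then show ?case by (intro le_upper_cover_meet)
next
  case (join_right1 p q0 q1)
  then show ?case using L_le_opt_trans[OF _ _ L_join_opt_left] by (simp add: L_join_opt_closed)
next
  case (join_right2 p q1 q0)
  then show ?case using L_le_opt_trans[OF _ _ L_join_opt_right] by (simp add: L_join_opt_closed)
qed

lemma wle_imp_lower_cover_le: "wle p q \<Longrightarrow> i \<in> I \<Longrightarrow> lower_cover p i \<sqsubseteq>\<^bsub>L i\<^esub> lower_cover q i"
proof (induction arbitrary: i rule: wle.induct)
  case (cover j p q)
  then show ?case by (rule cover_le_imp_lower_cover_le)
next
  case (join_left p0 q p1)
  then show ?case by (simp add: L_join_le)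
next
  case (meet_left1 p0 q p1)
  then show ?case using L_le_trans[OF _ L_meet_left] by (simp add: L_meet_closed)
next
  case (meet_left2 p1 q p0)
  then show ?case using L_le_trans[OF _ L_meet_right] by (simp add: L_meet_closed)
next
  case (meet_right p q0 q1)
  then show ?case by (simp add: L_meet_le)
next
  case (join_right1 p q0 q1)
  then show ?case using L_le_trans[OF _ _ L_join_left] by (simp add: L_join_closed)
next
  case (join_right2 p q1 q0)
  then show ?case using L_le_trans[OF _ _ L_join_right] by (simp add: L_join_closed)
qed

lemma wle_LMeet_rightD: "wle p (LMeet q0 q1) \<Longrightarrow> wle p q0 \<and> wle p q1"
proof (induction p "LMeet q0 q1" rule: wle.induct)
  case (cover i p)
  then have "le_opt (L i) (upper_cover p i) (Some (lower_cover q0 i))"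
    "le_opt (L i) (upper_cover p i) (Some (lower_cover q1 i))"
    using L_le_opt_trans[OF cover(1,2)] by (simp_all add: L_meet_left L_meet_right L_meet_closed)
  then show ?case using wle.cover[OF cover(1)] by blast
qed (auto intro: wle.intros)

lemma wle_LJoin_leftD: "wle (LJoin p0 p1) q \<Longrightarrow> wle p0 q \<and> wle p1 q"
proof (induction "LJoin p0 p1" q rule: wle.induct)
  case (cover i q)
  then show ?case using wle.cover[OF cover(1)] by (simp add: L_join_opt_le_iff)
qed (auto intro: wle.intros)

lemma wle_trans: "wle p q \<Longrightarrow> wle q r \<Longrightarrow> wle p r"
proof (induction p q arbitrary: r rule: wle.induct)
  case (cover i p q)
  then show ?case
    using L_le_opt_trans[OF cover(1,2)] wle_imp_lower_cover_le[OF cover(3,1)]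
    by (simp add: wle.cover[OF cover(1)])
next
  case (meet_right p q0 q1)
  have "wle p (LMeet q0 q1)" using meet_right.hyps by (rule wle.meet_right)
  with \<open>wle (LMeet q0 q1) r\<close> show ?case
  proof (induction "LMeet q0 q1" r rule: wle.induct)
    case (cover j r)
    then show ?case
      using L_le_opt_trans[OF cover(1) wle_imp_upper_cover_le[OF cover(3,1)] cover(2)]
      by (simp add: wle.cover[OF cover(1)])
  qed (auto intro: wle.intros meet_right.IH)
qed (auto intro: wle.intros dest: wle_LJoin_leftD)

lemma cp_gens_in_component: "x \<in> cp_gens L I z \<Longrightarrow> \<exists>i\<in>I. x \<in> carrier (L i)"
  unfolding cp_gens_def using index_nonempty zero_closed by auto

lemma component_in_cp_gens: "i \<in> I \<Longrightarrow> x \<in> carrier (L i) \<Longrightarrow> x \<in> cp_gens L I z"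
  unfolding cp_gens_def by auto

lemma wle_LVar: "i \<in> I \<Longrightarrow> x \<in> carrier (L i) \<Longrightarrow> y \<in> carrier (L i) \<Longrightarrow> x \<sqsubseteq>\<^bsub>L i\<^esub> y
  \<Longrightarrow> wle (LVar x) (LVar y)"
  by (rule wle.cover[of i]) auto

lemma wle_refl: "set_lterm p \<subseteq> cp_gens L I z \<Longrightarrow> wle p p"
proof (induction p)
  case (LVar x)
  then obtain i where "i \<in> I" "x \<in> carrier (L i)" using cp_gens_in_component by auto
  then show ?case using wle_LVar L_le_refl by blast
qed (auto intro: wle.intros)

lemma cp_le_imp_wle: "cp_le L I z s t \<Longrightarrow> wle s t"
proof (induction rule: cp_le.induct)
  case (trans s t u)
  then show ?case using wle_trans by blast
next
  case (gen_join1 i x y)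
  then show ?case
    by (intro wle.join_left wle_LVar[OF gen_join1(1)]) (auto simp: L_join_closed L_join_left L_join_right)
next
  case (gen_join2 i x y)
  then show ?case by (intro wle.cover[OF gen_join2(1)]) (simp add: L_join_closed L_le_refl)
next
  case (gen_meet1 i x y)
  have "le_opt (L i) (upper_cover (LMeet (LVar x) (LVar y)) i) (Some (x \<sqinter>\<^bsub>L i\<^esub> y))"
    using gen_meet1 zero_least by (simp add: upper_cover_LMeet L_meet_closed L_le_refl)
  then show ?case using gen_meet1 by (intro wle.cover[OF gen_meet1(1)]) (simp add: L_meet_closed)
next
  case (gen_meet2 i x y)
  then show ?case
    by (intro wle.meet_right wle_LVar[OF gen_meet2(1)]) (auto simp: L_meet_closed L_meet_left L_meet_right)
qed (auto intro: wle.intros wle_refl)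

lemma cp_le_gens: "cp_le L I z s t \<Longrightarrow> set_lterm s \<subseteq> cp_gens L I z \<and> set_lterm t \<subseteq> cp_gens L I z"
  by (induction rule: cp_le.induct) (auto simp: component_in_cp_gens L_join_closed L_meet_closed)

lemma cp_le_LVar:
  assumes "i \<in> I" "x \<in> carrier (L i)" "y \<in> carrier (L i)" "x \<sqsubseteq>\<^bsub>L i\<^esub> y"
  shows "cp_le L I z (LVar x) (LVar y)"
proof -
  have "cp_le L I z (LVar x) (LJoin (LVar x) (LVar y))"
    using assms by (intro cp_le.join_upper1) (auto simp: component_in_cp_gens)
  moreover have "x \<squnion>\<^bsub>L i\<^esub> y = y"
    using assms by (meson L_join_closed L_join_le L_join_left L_join_right L_le_antisym L_le_refl)
  ultimately show ?thesis using cp_le.trans cp_le.gen_join1[where L = L, OF assms(1-3)] by metis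
qed

lemma cp_le_join_mono: "cp_le L I z s s' \<Longrightarrow> cp_le L I z t t' \<Longrightarrow> cp_le L I z (LJoin s t) (LJoin s' t')"
  by (meson cp_le.join_least cp_le.join_upper1 cp_le.join_upper2 cp_le.trans cp_le_gens)

lemma cp_le_meet_mono: "cp_le L I z s s' \<Longrightarrow> cp_le L I z t t' \<Longrightarrow> cp_le L I z (LMeet s t) (LMeet s' t')"
  by (meson cp_le.meet_greatest cp_le.meet_lower1 cp_le.meet_lower2 cp_le.trans cp_le_gens)

lemma upper_cover_sound:
  "i \<in> I \<Longrightarrow> set_lterm p \<subseteq> cp_gens L I z \<Longrightarrow> upper_cover p i = Some c \<Longrightarrow> cp_le L I z p (LVar c)"
proof (induction p arbitrary: i c)
  case (LVar x)
  then show ?case by (auto split: if_splits intro: cp_le.refl)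
next
  case (LJoin p0 p1)
  then obtain c0 c1 where c: "upper_cover p0 i = Some c0" "upper_cover p1 i = Some c1"
    "c = c0 \<squnion>\<^bsub>L i\<^esub> c1"
    by (cases "upper_cover p0 i"; cases "upper_cover p1 i") auto
  have "c0 \<in> carrier (L i)" "c1 \<in> carrier (L i)" using upper_cover_closed[OF LJoin.prems(1)] c by auto
  then show ?case
    using cp_le.trans[OF cp_le_join_mono cp_le.gen_join1[where L = L, OF LJoin.prems(1)]] LJoin c by auto
next
  case (LMeet p0 p1)
  have meet_sound: "cp_le L I z (LMeet p0 p1) (LVar d)"
    if k: "k \<in> I" and d: "meet_opt (L k) (upper_cover p0 k) (upper_cover p1 k) = Some d" for k d
  proof (cases "upper_cover p0 k"; cases "upper_cover p1 k")
    fix c0 c1 assume c: "upper_cover p0 k = Some c0" "upper_cover p1 k = Some c1"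
    have "c0 \<in> carrier (L k)" "c1 \<in> carrier (L k)" using upper_cover_closed[OF k] c by auto
    then show ?thesis
      using cp_le.trans[OF cp_le_meet_mono cp_le.gen_meet1[where L = L, OF k]] LMeet k c d by auto
  next
    fix c0 assume c: "upper_cover p0 k = Some c0" "upper_cover p1 k = None"
    have "cp_le L I z (LMeet p0 p1) p0" using LMeet.prems(2) by (intro cp_le.meet_lower1) auto
    then show ?thesis using LMeet.IH(1)[OF k] LMeet.prems(2) c d by (auto intro: cp_le.trans)
  next
    fix c1 assume c: "upper_cover p0 k = None" "upper_cover p1 k = Some c1"
    have "cp_le L I z (LMeet p0 p1) p1" using LMeet.prems(2) by (intro cp_le.meet_lower2) auto
    then show ?thesis using LMeet.IH(2)[OF k] LMeet.prems(2) c d by (auto intro: cp_le.trans)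
  qed (use d in simp)
  show ?case
  proof (cases "meet_vanishes p0 p1")
    case True
    then obtain k where k: "k \<in> I" and "meet_opt (L k) (upper_cover p0 k) (upper_cover p1 k) = Some z"
      by (rule meet_vanishesE)
    then show ?thesis using meet_sound[OF k] True LMeet.prems(3) by (simp add: upper_cover_LMeet)
  next
    case False
    then show ?thesis using meet_sound LMeet.prems by (simp add: upper_cover_LMeet)
  qed
qed

lemma lower_cover_sound: "i \<in> I \<Longrightarrow> set_lterm q \<subseteq> cp_gens L I z \<Longrightarrow> cp_le L I z (LVar (lower_cover q i)) q"
proof (induction q)
  case (LVar x)
  show ?case
  proof (cases "x \<in> carrier (L i)")
    case True
    then show ?thesis using LVar by (auto intro: cp_le.refl)
  next
    case False
    obtain k where "k \<in> I" "x \<in> carrier (L k)" using cp_gens_in_component LVar.prems by auto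
    then show ?thesis using False cp_le_LVar zero_closed zero_least by simp
  qed
next
  case (LJoin q0 q1)
  then show ?case
    using cp_le.trans[OF cp_le.gen_join2[where L = L, OF LJoin.prems(1)] cp_le_join_mono] by simp
next
  case (LMeet q0 q1)
  then show ?case
    using cp_le.trans[OF cp_le.gen_meet2[where L = L, OF LMeet.prems(1)] cp_le_meet_mono] by simp
qed

lemma wle_imp_cp_le:
  "wle p q \<Longrightarrow> set_lterm p \<subseteq> cp_gens L I z \<Longrightarrow> set_lterm q \<subseteq> cp_gens L I z \<Longrightarrow> cp_le L I z p q"
proof (induction rule: wle.induct)
  case (cover i p q)
  then obtain c where c: "upper_cover p i = Some c" "c \<sqsubseteq>\<^bsub>L i\<^esub> lower_cover q i"
    by (cases "upper_cover p i") auto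
  have "c \<in> carrier (L i)" using upper_cover_closed[OF cover(1)] c by auto
  then show ?case
    using upper_cover_sound[OF cover(1,3) c(1)] cp_le_LVar[OF cover(1) _ _ c(2)]
      lower_cover_sound[OF cover(1,4)]
    by (meson cp_le.trans lower_cover_closed cover(1))
qed (auto intro: cp_le.intros cp_le.trans[OF cp_le.meet_lower1] cp_le.trans[OF cp_le.meet_lower2]
  cp_le.trans[OF _ cp_le.join_upper1] cp_le.trans[OF _ cp_le.join_upper2])

theorem cp_le_iff_wle:
  "set_lterm p \<subseteq> cp_gens L I z \<Longrightarrow> set_lterm q \<subseteq> cp_gens L I z \<Longrightarrow> cp_le L I z p q \<longleftrightarrow> wle p q"
  using cp_le_imp_wle wle_imp_cp_le by blast

lemma lsubst_in_cp_gens: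
  "b \<in> carrier (prodL L I) \<Longrightarrow> set_lterm p \<subseteq> I \<times> UNIV \<Longrightarrow> set_lterm (lsubst b p) \<subseteq> cp_gens L I z"
  by (force simp: prodL_def lterm.set_map component_in_cp_gens)

lemma wle_lsubst_mono:
  assumes "b \<in> carrier (prodL L I)" "b' \<in> carrier (prodL L I)" "b \<sqsubseteq>\<^bsub>prodL L I\<^esub> b'"
    and "set_lterm p \<subseteq> I \<times> UNIV"
  shows "wle (lsubst b p) (lsubst b' p)"
  using assms(4)
proof (induction p)
  case (LVar v)
  then show ?case using assms(1-3) by (cases v) (auto simp: prodL_def intro!: wle_LVar)
qed (auto intro: wle.intros)

lemma upper_cover_outside_vars:
  assumes "b \<in> carrier (prodL L I)" "set_lterm p \<subseteq> I \<times> UNIV" "k \<in> I" "k \<notin> fst ` set_lterm p"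
  shows "upper_cover (lsubst b p) k \<in> {None, Some z}"
  using assms(2,4)
proof (induction p)
  case (LVar v)
  then obtain j n where "v = (j, n)" "j \<in> I" "j \<noteq> k" by (cases v) auto
  then show ?case using assms(1,3) carrier_Int[of j k] by (auto simp: prodL_def)
next
  case (LJoin p1 p2)
  then have "upper_cover (lsubst b p1) k \<in> {None, Some z}" "upper_cover (lsubst b p2) k \<in> {None, Some z}"
    by auto
  then show ?case using assms(3) by (auto simp: zero_closed L_join_eq_zero_iff)
next
  case (LMeet p1 p2)
  then have "upper_cover (lsubst b p1) k \<in> {None, Some z}" "upper_cover (lsubst b p2) k \<in> {None, Some z}"
    by auto
  then show ?case using assms(3) by (auto simp: upper_cover_LMeet zero_closed)
qed

lemma upper_cover_le_zero_at_var:
  assumes "set_lterm p \<subseteq> I \<times> UNIV" "k \<in> I" "le_opt (L k) (upper_cover (lsubst b p) k) (Some z)"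
  obtains k' where "k' \<in> fst ` set_lterm p" "le_opt (L k') (upper_cover (lsubst b p) k') (Some z)"
proof -
  obtain v where v: "v \<in> set_lterm p" using set_lterm_nonempty[of p] by blast
  then have "fst v \<in> I" using assms(1) by auto
  then show ?thesis using that[of "fst v"] v upper_cover_le_zero_transfer[OF assms(2) _ assms(3)] by blast
qed

lemma cover_at_var:
  assumes b: "b \<in> carrier (prodL L I)" and p: "set_lterm p \<subseteq> I \<times> UNIV" and i: "i \<in> I"
    and le: "le_opt (L i) (upper_cover (lsubst b p) i) (Some (lower_cover q i))"
  shows "\<exists>k\<in>fst ` set_lterm p. le_opt (L k) (upper_cover (lsubst b p) k) (Some (lower_cover q k))"
proof (cases "i \<in> fst ` set_lterm p")
  case False
  then have "le_opt (L i) (upper_cover (lsubst b p) i) (Some z)"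
    using upper_cover_outside_vars[OF b p i] le i by (auto simp: zero_closed L_le_refl)
  then obtain k where k: "k \<in> fst ` set_lterm p" "le_opt (L k) (upper_cover (lsubst b p) k) (Some z)"
    using upper_cover_le_zero_at_var[OF p i] by blast
  have "k \<in> I" using k(1) p by auto
  then have "le_opt (L k) (Some z) (Some (lower_cover q k))" by (simp add: zero_least)
  then have "le_opt (L k) (upper_cover (lsubst b p) k) (Some (lower_cover q k))"
    using L_le_opt_trans[OF \<open>k \<in> I\<close> k(2)] \<open>k \<in> I\<close> by (simp add: zero_closed)
  then show ?thesis using k(1) by blast
qed (use le in blast)

lemma meet_vanishes_at_var:
  assumes b: "b \<in> carrier (prodL L I)" and p: "set_lterm (LMeet p1 p2) \<subseteq> I \<times> UNIV"
    and vanish: "meet_vanishes (lsubst b p1) (lsubst b p2)"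
  shows "\<exists>k\<in>fst ` set_lterm (LMeet p1 p2).
    le_opt (L k) (meet_opt (L k) (upper_cover (lsubst b p1) k) (upper_cover (lsubst b p2) k)) (Some z)"
proof -
  obtain i where i: "i \<in> I"
    and le: "le_opt (L i) (meet_opt (L i) (upper_cover (lsubst b p1) i) (upper_cover (lsubst b p2) i)) (Some z)"
    using vanish unfolding meet_vanishes_def by blast
  show ?thesis
  proof (cases "i \<in> fst ` set_lterm (LMeet p1 p2)")
    case False
    then have "upper_cover (lsubst b p1) i \<in> {None, Some z}" "upper_cover (lsubst b p2) i \<in> {None, Some z}"
      using upper_cover_outside_vars[OF b _ i] p by auto
    then have "le_opt (L i) (upper_cover (lsubst b p1) i) (Some z) \<or>
        le_opt (L i) (upper_cover (lsubst b p2) i) (Some z)"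
      using le i by (auto simp: zero_closed L_le_refl)
    moreover obtain v where v: "v \<in> set_lterm (LMeet p1 p2)"
      using set_lterm_nonempty[of "LMeet p1 p2"] by blast
    moreover have k: "fst v \<in> I" using v p by auto
    ultimately have "le_opt (L (fst v)) (upper_cover (lsubst b p1) (fst v)) (Some z) \<or>
        le_opt (L (fst v)) (upper_cover (lsubst b p2) (fst v)) (Some z)"
      using upper_cover_le_zero_transfer[OF i k] by blast
    then have "le_opt (L (fst v))
        (meet_opt (L (fst v)) (upper_cover (lsubst b p1) (fst v)) (upper_cover (lsubst b p2) (fst v))) (Some z)"
      using L_meet_opt_leI1[OF k] L_meet_opt_leI2[OF k] k by (auto simp: zero_closed)
    then show ?thesis using v by blast
  qed (use le in blast)
qed

lemma wle_cases:
  "wle p q \<Longrightarrow>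
   (\<exists>i\<in>I. le_opt (L i) (upper_cover p i) (Some (lower_cover q i))) \<or> (\<exists>p0 p1. p = LJoin p0 p1) \<or>
   (\<exists>p0 p1. p = LMeet p0 p1 \<and> (wle p0 q \<or> wle p1 q)) \<or> (\<exists>q0 q1. q = LMeet q0 q1) \<or>
   (\<exists>q0 q1. q = LJoin q0 q1 \<and> (wle p q0 \<or> wle p q1))"
  by (erule wle.cases) blast+

lemma wle_lsubst_cases:
  assumes b: "b \<in> carrier (prodL L I)" and p: "set_lterm p \<subseteq> I \<times> UNIV"
    and p_not_join: "\<And>p0 p1. p \<noteq> LJoin p0 p1" and q_not_meet: "\<And>q0 q1. q \<noteq> LMeet q0 q1"
    and le: "wle (lsubst b p) q"
  shows "(\<exists>i\<in>fst ` set_lterm p. le_opt (L i) (upper_cover (lsubst b p) i) (Some (lower_cover q i))) \<or>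
    (\<exists>p0 p1. p = LMeet p0 p1 \<and> (\<exists>p'\<in>{p0, p1}. wle (lsubst b p') q)) \<or>
    (\<exists>q0 q1. q = LJoin q0 q1 \<and> (\<exists>q'\<in>{q0, q1}. wle (lsubst b p) q'))"
  using wle_cases[OF le]
proof (elim disjE)
  assume "\<exists>i\<in>I. le_opt (L i) (upper_cover (lsubst b p) i) (Some (lower_cover q i))"
  then show ?thesis using cover_at_var[OF b p] by blast
next
  assume "\<exists>x0 x1. lsubst b p = LJoin x0 x1"
  then show ?thesis using p_not_join by (cases p) auto
next
  assume "\<exists>x0 x1. lsubst b p = LMeet x0 x1 \<and> (wle x0 q \<or> wle x1 q)"
  then show ?thesis by (cases p) auto
qed (use q_not_meet in auto)

lemma cp_class_in_carrier: "set_lterm s \<subseteq> cp_gens L I z \<Longrightarrow> cp_class L I z s \<in> carrier (coprod0 L I z)"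
  by (auto simp: coprod0_def)

lemma cp_class_le_iff:
  assumes "set_lterm s \<subseteq> cp_gens L I z" "set_lterm t \<subseteq> cp_gens L I z"
  shows "cp_class L I z s \<sqsubseteq>\<^bsub>coprod0 L I z\<^esub> cp_class L I z t \<longleftrightarrow> wle s t"
proof
  assume "cp_class L I z s \<sqsubseteq>\<^bsub>coprod0 L I z\<^esub> cp_class L I z t"
  then obtain s' t' where "cp_le L I z s s'" "cp_le L I z s' t'" "cp_le L I z t' t"
    by (auto simp: coprod0_def cp_class_def)
  then have "cp_le L I z s t" by (meson cp_le.trans)
  then show "wle s t" using cp_le_iff_wle[OF assms] by simp
next
  assume "wle s t"
  then have "cp_le L I z s t" using cp_le_iff_wle[OF assms] by simp
  moreover have "s \<in> cp_class L I z s" "t \<in> cp_class L I z t"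
    using assms by (auto simp: cp_class_def intro: cp_le.refl)
  ultimately show "cp_class L I z s \<sqsubseteq>\<^bsub>coprod0 L I z\<^esub> cp_class L I z t"
    by (auto simp: coprod0_def)
qed

end

locale isotone_family = lattice_family L I z + directed_set \<Lambda>
  for L :: "'i \<Rightarrow> 'a gorder" and I z and \<Lambda> :: "'l::order set" +
  fixes A :: "'l \<Rightarrow> 'i \<times> nat \<Rightarrow> 'a" and a :: "'i \<times> nat \<Rightarrow> 'a"
  assumes upper_continuous_L: "\<And>i. i \<in> I \<Longrightarrow> upper_continuous (L i)"
    and A_in: "\<And>l. l \<in> \<Lambda> \<Longrightarrow> A l \<in> carrier (prodL L I)"
    and A_mono: "\<And>l m. l \<in> \<Lambda> \<Longrightarrow> m \<in> \<Lambda> \<Longrightarrow> l \<le> m \<Longrightarrow> A l \<sqsubseteq>\<^bsub>prodL L I\<^esub> A m"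
    and a_in: "a \<in> carrier (prodL L I)"
    and a_lub: "is_lub (prodL L I) a (A ` \<Lambda>)"
begin

lemma A_le_a: "l \<in> \<Lambda> \<Longrightarrow> A l \<sqsubseteq>\<^bsub>prodL L I\<^esub> a"
  using a_lub A_in by (blast intro: least_Upper_above)

lemma component_in: "b \<in> carrier (prodL L I) \<Longrightarrow> i \<in> I \<Longrightarrow> b (i, n) \<in> carrier (L i)"
  by (simp add: prodL_def)

lemma prodL_le_iff: "x \<sqsubseteq>\<^bsub>prodL L I\<^esub> y \<longleftrightarrow> (\<forall>i\<in>I. \<forall>n. x (i, n) \<sqsubseteq>\<^bsub>L i\<^esub> y (i, n))"
  by (simp add: prodL_def)

lemma a_component_le:
  assumes i: "i \<in> I" and S: "cofinal \<Lambda> S" and c: "c \<in> carrier (L i)"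
    and le: "\<And>l. l \<in> S \<Longrightarrow> A l (i, n) \<sqsubseteq>\<^bsub>L i\<^esub> c"
  shows "a (i, n) \<sqsubseteq>\<^bsub>L i\<^esub> c"
proof -
  define b where "b = a((i, n) := c)"
  have b_in: "b \<in> carrier (prodL L I)" using a_in c i by (auto simp: b_def prodL_def)
  have "A l \<sqsubseteq>\<^bsub>prodL L I\<^esub> b" if l: "l \<in> \<Lambda>" for l
  proof -
    obtain s where s: "s \<in> S" "l \<le> s" using S l unfolding cofinal_def by blast
    have "s \<in> \<Lambda>" using S s unfolding cofinal_def by blast
    then have "A l (i, n) \<sqsubseteq>\<^bsub>L i\<^esub> A s (i, n)" using A_mono[OF l _ s(2)] i by (simp add: prodL_def)
    then have "A l (i, n) \<sqsubseteq>\<^bsub>L i\<^esub> c"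
      using L_le_trans[OF i _ le[OF s(1)]] component_in[OF A_in i] l \<open>s \<in> \<Lambda>\<close> c by blast
    then show ?thesis using A_le_a[OF l] by (auto simp: b_def prodL_def)
  qed
  then have "b \<in> Upper (prodL L I) (A ` \<Lambda>)" using b_in by (blast intro: Upper_memI)
  then have "a \<sqsubseteq>\<^bsub>prodL L I\<^esub> b" by (rule least_le[OF a_lub])
  then have "a (i, n) \<sqsubseteq>\<^bsub>L i\<^esub> b (i, n)" using i unfolding prodL_le_iff by blast
  then show ?thesis by (simp add: b_def)
qed

lemma a_component_zero:
  assumes j: "j \<in> I" and i: "i \<in> I" "j \<noteq> i" and S: "cofinal \<Lambda> S"
    and in_i: "\<And>l. l \<in> S \<Longrightarrow> A l (j, n) \<in> carrier (L i)"
  shows "a (j, n) = z"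
proof -
  have "A l (j, n) = z" if "l \<in> S" for l
    using carrier_Int[OF j i] in_i[OF that] component_in[OF A_in j] S that unfolding cofinal_def by blast
  then have "a (j, n) \<sqsubseteq>\<^bsub>L j\<^esub> z"
    using a_component_le[OF j S zero_closed[OF j]] L_le_refl[OF j zero_closed[OF j]] by simp
  then show ?thesis using j component_in[OF a_in j] by (simp add: L_le_zero_iff)
qed

lemma upper_cover_lsubst_A_mono:
  "set_lterm p \<subseteq> I \<times> UNIV \<Longrightarrow> i \<in> I \<Longrightarrow> l \<in> \<Lambda> \<Longrightarrow> m \<in> \<Lambda> \<Longrightarrow> l \<le> m \<Longrightarrow>
   le_opt (L i) (upper_cover (lsubst (A l) p) i) (upper_cover (lsubst (A m) p) i)"
  by (intro wle_imp_upper_cover_le wle_lsubst_mono A_in A_mono)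

lemma upper_cover_lsubst_A_le_a:
  "set_lterm p \<subseteq> I \<times> UNIV \<Longrightarrow> i \<in> I \<Longrightarrow> l \<in> \<Lambda> \<Longrightarrow>
   le_opt (L i) (upper_cover (lsubst (A l) p) i) (upper_cover (lsubst a p) i)"
  by (intro wle_imp_upper_cover_le wle_lsubst_mono A_in a_in A_le_a)

(*
  u0 is the supremum of the isotone family u in L_k extended by a top (None), along every cofinal
  subset of indices; the top is compact: it is the supremum only if it is eventually reached.
*)
definition opt_sup :: "'i \<Rightarrow> ('l \<Rightarrow> 'a option) \<Rightarrow> 'a option \<Rightarrow> bool" where
  "opt_sup k u u0 \<longleftrightarrow>
     (\<forall>l\<in>\<Lambda>. set_option (u l) \<subseteq> carrier (L k)) \<and> set_option u0 \<subseteq> carrier (L k) \<and>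
     (\<forall>l\<in>\<Lambda>. \<forall>m\<in>\<Lambda>. l \<le> m \<longrightarrow> le_opt (L k) (u l) (u m)) \<and> (\<forall>l\<in>\<Lambda>. le_opt (L k) (u l) u0) \<and>
     (\<forall>S c. cofinal \<Lambda> S \<longrightarrow> c \<in> carrier (L k) \<longrightarrow> (\<forall>l\<in>S. le_opt (L k) (u l) (Some c))
        \<longrightarrow> le_opt (L k) u0 (Some c)) \<and>
     (u0 = None \<longrightarrow> eventually_in \<Lambda> (\<lambda>l. u l = None))"

lemma opt_supD:
  assumes "opt_sup k u u0"
  shows "l \<in> \<Lambda> \<Longrightarrow> set_option (u l) \<subseteq> carrier (L k)" and "set_option u0 \<subseteq> carrier (L k)"
    and "l \<in> \<Lambda> \<Longrightarrow> le_opt (L k) (u l) u0"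
    and "cofinal \<Lambda> S \<Longrightarrow> c \<in> carrier (L k) \<Longrightarrow> (\<And>l. l \<in> S \<Longrightarrow> le_opt (L k) (u l) (Some c))
      \<Longrightarrow> le_opt (L k) u0 (Some c)"
    and "u0 = None \<Longrightarrow> eventually_in \<Lambda> (\<lambda>l. u l = None)"
    and "l \<in> \<Lambda> \<Longrightarrow> m \<in> \<Lambda> \<Longrightarrow> l \<le> m \<Longrightarrow> le_opt (L k) (u l) (u m)"
  using assms unfolding opt_sup_def by auto

lemma opt_sup_Some_is_lub:
  assumes sup: "opt_sup k u (Some u0)" and S: "cofinal \<Lambda> S"
  shows "is_lub (L k) u0 ((\<lambda>l. the (u l)) ` S)" and "\<And>l. l \<in> \<Lambda> \<Longrightarrow> u l \<noteq> None"
proof -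
  show not_None: "u l \<noteq> None" if "l \<in> \<Lambda>" for l
    using opt_supD(3)[OF sup that] by (cases "u l") auto
  have S_sub: "S \<subseteq> \<Lambda>" using S unfolding cofinal_def by blast
  have le_u0: "the (u l) \<sqsubseteq>\<^bsub>L k\<^esub> u0" and closed: "the (u l) \<in> carrier (L k)" if "l \<in> S" for l
  proof -
    have l: "l \<in> \<Lambda>" using that S_sub by blast
    then obtain c where c: "u l = Some c" using not_None by blast
    show "the (u l) \<sqsubseteq>\<^bsub>L k\<^esub> u0" using opt_supD(3)[OF sup l] c by simp
    show "the (u l) \<in> carrier (L k)" using opt_supD(1)[OF sup l] c by simp
  qed
  show "is_lub (L k) u0 ((\<lambda>l. the (u l)) ` S)"
  proof (rule least_UpperI)
    show "u0 \<sqsubseteq>\<^bsub>L k\<^esub> c" if c: "c \<in> Upper (L k) ((\<lambda>l. the (u l)) ` S)" for c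
    proof -
      have "le_opt (L k) (u l) (Some c)" if "l \<in> S" for l
      proof -
        obtain c' where "u l = Some c'" using not_None \<open>l \<in> S\<close> S_sub by blast
        moreover have "the (u l) \<sqsubseteq>\<^bsub>L k\<^esub> c" using Upper_memD[OF c] closed \<open>l \<in> S\<close> by blast
        ultimately show ?thesis by simp
      qed
      moreover have "c \<in> carrier (L k)" using c by (simp add: Upper_def)
      ultimately show ?thesis using opt_supD(4)[OF sup S] by simp
    qed
  qed (use le_u0 closed opt_supD(2)[OF sup] in auto)
qed

lemma meet_opt_sup_None_left:
  assumes u: "opt_sup k u None" and v: "opt_sup k v v0" and S: "cofinal \<Lambda> S"
    and d: "d \<in> carrier (L k)" and le: "\<And>l. l \<in> S \<Longrightarrow> le_opt (L k) (meet_opt (L k) (u l) (v l)) (Some d)"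
  shows "le_opt (L k) (meet_opt (L k) None v0) (Some d)"
proof -
  have S': "cofinal \<Lambda> {s\<in>S. u s = None}"
    using cofinal_eventually_in[OF S opt_supD(5)[OF u]] by simp
  show ?thesis
  proof (cases v0)
    case None
    then obtain s where "s \<in> S" "u s = None" "v s = None"
      using cofinal_nonempty[OF cofinal_eventually_in[OF S' opt_supD(5)[OF v]]] by auto
    then show ?thesis using le by fastforce
  next
    case (Some v1)
    have "le_opt (L k) (v l) (Some d)" if "l \<in> {s\<in>S. u s = None}" for l
      using le[of l] that by simp
    then show ?thesis using opt_supD(4)[OF v S' d] Some by simp
  qed
qed

lemma meet_opt_sup:
  assumes k: "k \<in> I" and u: "opt_sup k u u0" and v: "opt_sup k v v0" and S: "cofinal \<Lambda> S"
    and d: "d \<in> carrier (L k)" and le: "\<And>l. l \<in> S \<Longrightarrow> le_opt (L k) (meet_opt (L k) (u l) (v l)) (Some d)"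
  shows "le_opt (L k) (meet_opt (L k) u0 v0) (Some d)"
proof (cases "u0 = None \<or> v0 = None")
  case True
  then show ?thesis
    using meet_opt_sup_None_left[OF _ v S d le] meet_opt_sup_None_left[OF _ u S d] u v le
    by (auto simp: meet_opt_commute)
next
  case False
  then obtain u1 v1 where some: "u0 = Some u1" "v0 = Some v1" by auto
  have S_sub: "S \<subseteq> \<Lambda>" using S unfolding cofinal_def by blast
  note u_lub = opt_sup_Some_is_lub[OF u[unfolded some(1)] S]
    and v_lub = opt_sup_Some_is_lub[OF v[unfolded some(2)] S]
  have u_Some: "u l = Some (the (u l))" and v_Some: "v l = Some (the (v l))" if "l \<in> S" for l
    using u_lub(2) v_lub(2) that S_sub by auto
  have "u1 \<sqinter>\<^bsub>L k\<^esub> v1 \<sqsubseteq>\<^bsub>L k\<^esub> d"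
  proof (rule L_meet_lub_lub_le[OF k upper_continuous_L[OF k] cofinal_nonempty[OF S] _ _ _ u_lub(1) _ _ v_lub(1) d])
    show "\<exists>s\<in>S. l \<le> s \<and> m \<le> s" if "l \<in> S" "m \<in> S" for l m
      using cofinal_upper_bound[OF S] that S_sub by blast
    show "the (u l) \<in> carrier (L k)" "the (v l) \<in> carrier (L k)" if "l \<in> S" for l
      using opt_supD(1)[OF u] opt_supD(1)[OF v] u_Some[OF that] v_Some[OF that] that S_sub
      by (metis insert_subset option.set(2) subsetD)+
    show "the (u l) \<sqsubseteq>\<^bsub>L k\<^esub> the (u m)" "the (v l) \<sqsubseteq>\<^bsub>L k\<^esub> the (v m)"
      if "l \<in> S" "m \<in> S" "l \<le> m" for l m
      using opt_supD(6)[OF u, of l m] opt_supD(6)[OF v, of l m] u_Some v_Some that S_sub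
      by (metis le_opt.simps(3) subsetD)+
    show "the (u s) \<sqinter>\<^bsub>L k\<^esub> the (v s) \<sqsubseteq>\<^bsub>L k\<^esub> d" if "s \<in> S" for s
      using le[OF that] u_Some[OF that] v_Some[OF that] by (metis le_opt.simps(3) meet_opt.simps(3))
  qed
  then show ?thesis using some by simp
qed

lemma opt_sup_upper_coverI:
  assumes p: "set_lterm p \<subseteq> I \<times> UNIV" and i: "i \<in> I"
    and least: "\<And>S c. cofinal \<Lambda> S \<Longrightarrow> c \<in> carrier (L i) \<Longrightarrow>
      (\<And>l. l \<in> S \<Longrightarrow> le_opt (L i) (upper_cover (lsubst (A l) p) i) (Some c)) \<Longrightarrow>
      le_opt (L i) (upper_cover (lsubst a p) i) (Some c)"
    and top: "upper_cover (lsubst a p) i = None \<Longrightarrow>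
      eventually_in \<Lambda> (\<lambda>l. upper_cover (lsubst (A l) p) i = None)"
  shows "opt_sup i (\<lambda>l. upper_cover (lsubst (A l) p) i) (upper_cover (lsubst a p) i)"
  unfolding opt_sup_def
  using upper_cover_lsubst_A_mono[OF p i] upper_cover_lsubst_A_le_a[OF p i] least top i by auto

lemma opt_sup_upper_cover_LVar:
  assumes j: "j \<in> I" and i: "i \<in> I"
  shows "opt_sup i (\<lambda>l. upper_cover (lsubst (A l) (LVar (j, n))) i) (upper_cover (lsubst a (LVar (j, n))) i)"
proof (rule opt_sup_upper_coverI)
  fix S c assume S: "cofinal \<Lambda> S" and c: "c \<in> carrier (L i)"
    and le: "\<And>l. l \<in> S \<Longrightarrow> le_opt (L i) (upper_cover (lsubst (A l) (LVar (j, n))) i) (Some c)"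
  show "le_opt (L i) (upper_cover (lsubst a (LVar (j, n))) i) (Some c)"
  proof (cases "j = i")
    case True
    have "A l (i, n) \<sqsubseteq>\<^bsub>L i\<^esub> c" if "l \<in> S" for l
      using le[OF that] component_in[OF A_in i] that S True unfolding cofinal_def by auto
    then have "a (i, n) \<sqsubseteq>\<^bsub>L i\<^esub> c" by (rule a_component_le[OF i S c])
    then show ?thesis using True component_in[OF a_in i] by simp
  next
    case False
    then have "a (j, n) = z"
      using a_component_zero[OF j i False S] le by (fastforce split: if_splits)
    then show ?thesis using zero_closed[OF i] zero_least[OF i c] by simp
  qed
next
  assume None: "upper_cover (lsubst a (LVar (j, n))) i = None"
  then have "j \<noteq> i" "a (j, n) \<noteq> z" using component_in[OF a_in i] zero_closed[OF i] by auto
  then show "eventually_in \<Lambda> (\<lambda>l. upper_cover (lsubst (A l) (LVar (j, n))) i = None)"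
    using a_component_zero[OF j i _ cofinal_if_not_eventually_in] by fastforce
qed (use i j in auto)

lemma opt_sup_upper_cover_LJoin:
  assumes p: "set_lterm (LJoin p1 p2) \<subseteq> I \<times> UNIV" and i: "i \<in> I"
    and sup1: "opt_sup i (\<lambda>l. upper_cover (lsubst (A l) p1) i) (upper_cover (lsubst a p1) i)"
    and sup2: "opt_sup i (\<lambda>l. upper_cover (lsubst (A l) p2) i) (upper_cover (lsubst a p2) i)"
  shows "opt_sup i (\<lambda>l. upper_cover (lsubst (A l) (LJoin p1 p2)) i) (upper_cover (lsubst a (LJoin p1 p2)) i)"
proof (rule opt_sup_upper_coverI[OF p i])
  fix S c assume S: "cofinal \<Lambda> S" and c: "c \<in> carrier (L i)"
    and le: "\<And>l. l \<in> S \<Longrightarrow> le_opt (L i) (upper_cover (lsubst (A l) (LJoin p1 p2)) i) (Some c)"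
  then have "le_opt (L i) (upper_cover (lsubst (A l) p1) i) (Some c)"
    "le_opt (L i) (upper_cover (lsubst (A l) p2) i) (Some c)" if "l \<in> S" for l
    using le[OF that] i by (simp_all add: L_join_opt_le_iff)
  then show "le_opt (L i) (upper_cover (lsubst a (LJoin p1 p2)) i) (Some c)"
    using opt_supD(4)[OF sup1 S c] opt_supD(4)[OF sup2 S c] i c by (simp add: L_join_opt_le_iff)
next
  assume "upper_cover (lsubst a (LJoin p1 p2)) i = None"
  then have "upper_cover (lsubst a p1) i = None \<or> upper_cover (lsubst a p2) i = None" by simp
  then show "eventually_in \<Lambda> (\<lambda>l. upper_cover (lsubst (A l) (LJoin p1 p2)) i = None)"
    using opt_supD(5)[OF sup1] opt_supD(5)[OF sup2] by (auto elim: eventually_in_mono)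
qed

lemma eventually_not_meet_vanishes:
  assumes p: "set_lterm (LMeet p1 p2) \<subseteq> I \<times> UNIV"
    and sup1: "\<And>k. k \<in> I \<Longrightarrow> opt_sup k (\<lambda>l. upper_cover (lsubst (A l) p1) k) (upper_cover (lsubst a p1) k)"
    and sup2: "\<And>k. k \<in> I \<Longrightarrow> opt_sup k (\<lambda>l. upper_cover (lsubst (A l) p2) k) (upper_cover (lsubst a p2) k)"
    and not_vanish: "\<not> meet_vanishes (lsubst a p1) (lsubst a p2)"
  shows "eventually_in \<Lambda> (\<lambda>l. \<not> meet_vanishes (lsubst (A l) p1) (lsubst (A l) p2))"
(* Otherwise the meets vanish cofinally often in one fixed component among the finitely many
   occurring in p1 and p2, and by continuity so does their limit. *)
proof (rule ccontr)
  define W where "W b k = meet_opt (L k) (upper_cover (lsubst b p1) k) (upper_cover (lsubst b p2) k)" for b k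
  let ?C = "fst ` set_lterm (LMeet p1 p2)" and ?T = "{l\<in>\<Lambda>. meet_vanishes (lsubst (A l) p1) (lsubst (A l) p2)}"
  assume "\<not> ?thesis"
  then have T: "cofinal \<Lambda> ?T" by (rule cofinal_if_not_eventually_in)
  have vanish_at_var: "\<exists>k\<in>?C. le_opt (L k) (W (A l) k) (Some z)" if "l \<in> ?T" for l
  proof -
    have "l \<in> \<Lambda>" "meet_vanishes (lsubst (A l) p1) (lsubst (A l) p2)" using that by auto
    then show ?thesis unfolding W_def by (rule meet_vanishes_at_var[OF A_in p])
  qed
  have "finite ?C" by (simp add: lterm.set_finite)
  from cofinal_bexE[OF this T vanish_at_var]
  obtain k where k: "k \<in> ?C" and cof: "cofinal \<Lambda> {l\<in>?T. le_opt (L k) (W (A l) k) (Some z)}" ..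
  have "k \<in> I" using k p by auto
  have "le_opt (L k) (W a k) (Some z)"
    unfolding W_def by (rule meet_opt_sup[OF \<open>k \<in> I\<close> sup1 sup2 cof zero_closed]) (simp_all add: W_def \<open>k \<in> I\<close>)
  then show False using not_vanish \<open>k \<in> I\<close> unfolding W_def meet_vanishes_def by blast
qed

lemma opt_sup_upper_cover_LMeet:
  assumes p: "set_lterm (LMeet p1 p2) \<subseteq> I \<times> UNIV" and i: "i \<in> I"
    and sup1: "\<And>k. k \<in> I \<Longrightarrow> opt_sup k (\<lambda>l. upper_cover (lsubst (A l) p1) k) (upper_cover (lsubst a p1) k)"
    and sup2: "\<And>k. k \<in> I \<Longrightarrow> opt_sup k (\<lambda>l. upper_cover (lsubst (A l) p2) k) (upper_cover (lsubst a p2) k)"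
  shows "opt_sup i (\<lambda>l. upper_cover (lsubst (A l) (LMeet p1 p2)) i) (upper_cover (lsubst a (LMeet p1 p2)) i)"
proof -
  define W where "W b = meet_opt (L i) (upper_cover (lsubst b p1) i) (upper_cover (lsubst b p2) i)" for b
  define V where "V b \<longleftrightarrow> meet_vanishes (lsubst b p1) (lsubst b p2)" for b
  have U_eq: "upper_cover (lsubst b (LMeet p1 p2)) i = (if V b then Some z else W b)" for b
    by (simp add: upper_cover_LMeet V_def W_def)
  have eventually_not_V: "eventually_in \<Lambda> (\<lambda>l. \<not> V (A l))" if "\<not> V a"
    unfolding V_def using p sup1 sup2 that[unfolded V_def] by (rule eventually_not_meet_vanishes)
  show ?thesis
  proof (rule opt_sup_upper_coverI[OF p i])
    fix S c assume S: "cofinal \<Lambda> S" and c: "c \<in> carrier (L i)"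
      and le: "\<And>l. l \<in> S \<Longrightarrow> le_opt (L i) (upper_cover (lsubst (A l) (LMeet p1 p2)) i) (Some c)"
    show "le_opt (L i) (upper_cover (lsubst a (LMeet p1 p2)) i) (Some c)"
    proof (cases "V a")
      case True
      then show ?thesis unfolding U_eq using zero_least[OF i c] by simp
    next
      case False
      have "le_opt (L i) (W (A l)) (Some c)" if "l \<in> {s\<in>S. \<not> V (A s)}" for l
        using le[of l] that unfolding U_eq by auto
      then have "le_opt (L i) (W a) (Some c)"
        unfolding W_def
        by (rule meet_opt_sup[OF i sup1[OF i] sup2[OF i] cofinal_eventually_in[OF S eventually_not_V[OF False]] c])
      then show ?thesis unfolding U_eq using False by simp
    qed
  next
    assume "upper_cover (lsubst a (LMeet p1 p2)) i = None"
    then have "\<not> V a" "upper_cover (lsubst a p1) i = None" "upper_cover (lsubst a p2) i = None"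
      unfolding U_eq W_def by (auto split: if_splits elim: meet_opt.elims)
    then have "eventually_in \<Lambda> (\<lambda>l. \<not> V (A l) \<and> upper_cover (lsubst (A l) p1) i = None
        \<and> upper_cover (lsubst (A l) p2) i = None)"
      using eventually_not_V opt_supD(5)[OF sup1[OF i]] opt_supD(5)[OF sup2[OF i]]
      by (simp add: eventually_in_conj)
    then show "eventually_in \<Lambda> (\<lambda>l. upper_cover (lsubst (A l) (LMeet p1 p2)) i = None)"
      by (rule eventually_in_mono) (simp add: upper_cover_LMeet V_def)
  qed
qed

lemma opt_sup_upper_cover:
  "set_lterm p \<subseteq> I \<times> UNIV \<Longrightarrow> i \<in> I \<Longrightarrow>
   opt_sup i (\<lambda>l. upper_cover (lsubst (A l) p) i) (upper_cover (lsubst a p) i)"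
proof (induction p arbitrary: i)
  case (LVar v)
  then show ?case using opt_sup_upper_cover_LVar by (cases v) auto
next
  case (LJoin p1 p2)
  then show ?case by (intro opt_sup_upper_cover_LJoin) auto
next
  case (LMeet p1 p2)
  then show ?case by (intro opt_sup_upper_cover_LMeet) auto
qed

lemma wle_lsubst_sup_step:
  assumes p: "set_lterm p \<subseteq> I \<times> UNIV"
    and p_not_join: "\<And>p0 p1. p \<noteq> LJoin p0 p1" and q_not_meet: "\<And>q0 q1. q \<noteq> LMeet q0 q1"
    and IH_p: "\<And>p0 p1 p' S. p = LMeet p0 p1 \<Longrightarrow> p' \<in> {p0, p1} \<Longrightarrow> cofinal \<Lambda> S \<Longrightarrow>
      (\<And>l. l \<in> S \<Longrightarrow> wle (lsubst (A l) p') q) \<Longrightarrow> wle (lsubst a p') q"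
    and IH_q: "\<And>q0 q1 q' S. q = LJoin q0 q1 \<Longrightarrow> q' \<in> {q0, q1} \<Longrightarrow> cofinal \<Lambda> S \<Longrightarrow>
      (\<And>l. l \<in> S \<Longrightarrow> wle (lsubst (A l) p) q') \<Longrightarrow> wle (lsubst a p) q'"
    and S: "cofinal \<Lambda> S" and le: "\<And>l. l \<in> S \<Longrightarrow> wle (lsubst (A l) p) q"
  shows "wle (lsubst a p) q"
proof -
  have "l \<in> \<Lambda>" if "l \<in> S" for l using that S unfolding cofinal_def by blast
  with le have cases: "(\<exists>i\<in>fst ` set_lterm p. le_opt (L i) (upper_cover (lsubst (A l) p) i) (Some (lower_cover q i))) \<or>
    (\<exists>p0 p1. p = LMeet p0 p1 \<and> (\<exists>p'\<in>{p0, p1}. wle (lsubst (A l) p') q)) \<or>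
    (\<exists>q0 q1. q = LJoin q0 q1 \<and> (\<exists>q'\<in>{q0, q1}. wle (lsubst (A l) p) q'))" if "l \<in> S" for l
    using wle_lsubst_cases[OF A_in p p_not_join q_not_meet] that by blast
  from S cases show ?thesis
  proof (rule cofinal_disj3E)
    fix T assume T: "cofinal \<Lambda> T"
      and cover: "\<And>l. l \<in> T \<Longrightarrow>
        \<exists>i\<in>fst ` set_lterm p. le_opt (L i) (upper_cover (lsubst (A l) p) i) (Some (lower_cover q i))"
    have "finite (fst ` set_lterm p)" by (simp add: lterm.set_finite)
    from cofinal_bexE[OF this T cover] obtain i where i: "i \<in> fst ` set_lterm p"
      and T': "cofinal \<Lambda> {l\<in>T. le_opt (L i) (upper_cover (lsubst (A l) p) i) (Some (lower_cover q i))}" ..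
    have "i \<in> I" using i p by auto
    have "le_opt (L i) (upper_cover (lsubst a p) i) (Some (lower_cover q i))"
      by (rule opt_supD(4)[OF opt_sup_upper_cover[OF p \<open>i \<in> I\<close>] T']) (simp_all add: \<open>i \<in> I\<close>)
    then show ?thesis using \<open>i \<in> I\<close> by (rule wle.cover[rotated])
  next
    fix T assume T: "cofinal \<Lambda> T"
      and meet: "\<And>l. l \<in> T \<Longrightarrow> \<exists>p0 p1. p = LMeet p0 p1 \<and> (\<exists>p'\<in>{p0, p1}. wle (lsubst (A l) p') q)"
    obtain p0 p1 where p01: "p = LMeet p0 p1" using meet cofinal_nonempty[OF T] by blast
    then have one_of: "\<exists>p'\<in>{p0, p1}. wle (lsubst (A l) p') q" if "l \<in> T" for l
      using meet[OF that] by auto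
    have "finite {p0, p1}" by simp
    from cofinal_bexE[OF this T one_of] obtain p' where "p' \<in> {p0, p1}"
      and "cofinal \<Lambda> {l\<in>T. wle (lsubst (A l) p') q}" ..
    then have "p' \<in> {p0, p1}" "wle (lsubst a p') q" using IH_p[OF p01] by auto
    then show ?thesis using p01 by (auto intro: wle.meet_left1 wle.meet_left2)
  next
    fix T assume T: "cofinal \<Lambda> T"
      and join: "\<And>l. l \<in> T \<Longrightarrow> \<exists>q0 q1. q = LJoin q0 q1 \<and> (\<exists>q'\<in>{q0, q1}. wle (lsubst (A l) p) q')"
    obtain q0 q1 where q01: "q = LJoin q0 q1" using join cofinal_nonempty[OF T] by blast
    then have one_of: "\<exists>q'\<in>{q0, q1}. wle (lsubst (A l) p) q'" if "l \<in> T" for l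
      using join[OF that] by auto
    have "finite {q0, q1}" by simp
    from cofinal_bexE[OF this T one_of] obtain q' where "q' \<in> {q0, q1}"
      and "cofinal \<Lambda> {l\<in>T. wle (lsubst (A l) p) q'}" ..
    then have "q' \<in> {q0, q1}" "wle (lsubst a p) q'" using IH_q[OF q01] by auto
    then show ?thesis using q01 by (auto intro: wle.join_right1 wle.join_right2)
  qed
qed

lemma wle_lsubst_sup_nonjoin:
  assumes p: "set_lterm p \<subseteq> I \<times> UNIV" and p_not_join: "\<And>p0 p1. p \<noteq> LJoin p0 p1"
    and IH_p: "\<And>p0 p1 p' q S. p = LMeet p0 p1 \<Longrightarrow> p' \<in> {p0, p1} \<Longrightarrow> cofinal \<Lambda> S \<Longrightarrow>
      (\<And>l. l \<in> S \<Longrightarrow> wle (lsubst (A l) p') q) \<Longrightarrow> wle (lsubst a p') q"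
  shows "cofinal \<Lambda> S \<Longrightarrow> (\<And>l. l \<in> S \<Longrightarrow> wle (lsubst (A l) p) q) \<Longrightarrow> wle (lsubst a p) q"
proof (induction q arbitrary: S)
  case (LVar x)
  show ?case by (rule wle_lsubst_sup_step[OF p p_not_join _ IH_p _ LVar.prems]) simp_all
next
  case (LJoin q0 q1)
  show ?case
  proof (rule wle_lsubst_sup_step[OF p p_not_join _ IH_p _ LJoin.prems])
    fix q0' q1' q' S'
    assume "LJoin q0 q1 = LJoin q0' q1'" "q' \<in> {q0', q1'}" "cofinal \<Lambda> S'"
      "\<And>l. l \<in> S' \<Longrightarrow> wle (lsubst (A l) p) q'"
    then show "wle (lsubst a p) q'" using LJoin.IH by auto
  qed simp_all
next
  case (LMeet q0 q1)
  have "wle (lsubst (A l) p) q0 \<and> wle (lsubst (A l) p) q1" if "l \<in> S" for l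
    using wle_LMeet_rightD[OF LMeet.prems(2)[OF that]] .
  then have "wle (lsubst a p) q0" "wle (lsubst a p) q1"
    using LMeet.IH(1)[OF LMeet.prems(1)] LMeet.IH(2)[OF LMeet.prems(1)] by simp_all
  then show ?case by (rule wle.meet_right)
qed

lemma wle_lsubst_sup:
  "set_lterm p \<subseteq> I \<times> UNIV \<Longrightarrow> cofinal \<Lambda> S \<Longrightarrow> (\<And>l. l \<in> S \<Longrightarrow> wle (lsubst (A l) p) q)
   \<Longrightarrow> wle (lsubst a p) q"
proof (induction p arbitrary: q S)
  case (LVar v)
  show ?case by (rule wle_lsubst_sup_nonjoin[OF LVar.prems(1) _ _ LVar.prems(2,3)]) simp_all
next
  case (LJoin p1 p2)
  have both: "wle (lsubst (A l) p1) q \<and> wle (lsubst (A l) p2) q" if "l \<in> S" for l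
    using wle_LJoin_leftD[of "lsubst (A l) p1" "lsubst (A l) p2" q] LJoin.prems(3)[OF that] by simp
  have "set_lterm p1 \<subseteq> I \<times> UNIV" "set_lterm p2 \<subseteq> I \<times> UNIV" using LJoin.prems(1) by auto
  then have "wle (lsubst a p1) q" "wle (lsubst a p2) q"
    using LJoin.IH(1)[OF _ LJoin.prems(2)] LJoin.IH(2)[OF _ LJoin.prems(2)] both by blast+
  then show ?case by (simp add: wle.join_left)
next
  case (LMeet p1 p2)
  have vars: "set_lterm p1 \<subseteq> I \<times> UNIV" "set_lterm p2 \<subseteq> I \<times> UNIV" using LMeet.prems(1) by auto
  show ?case
  proof (rule wle_lsubst_sup_nonjoin[OF LMeet.prems(1) _ _ LMeet.prems(2,3)])
    fix p0 p1' p' q' S'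
    assume "LMeet p1 p2 = LMeet p0 p1'" "p' \<in> {p0, p1'}" and S': "cofinal \<Lambda> S'"
      and le: "\<And>l. l \<in> S' \<Longrightarrow> wle (lsubst (A l) p') q'"
    then have "p' = p1 \<or> p' = p2" by auto
    then show "wle (lsubst a p') q'"
    proof (elim disjE)
      assume "p' = p1"
      then show ?thesis using LMeet.IH(1)[OF vars(1) S', of q'] le by simp
    next
      assume "p' = p2"
      then show ?thesis using LMeet.IH(2)[OF vars(2) S', of q'] le by simp
    qed
  qed simp
qed

lemma coprod0_lub:
  assumes p: "set_lterm p \<subseteq> I \<times> UNIV"
  shows "is_lub (coprod0 L I z) (cp_class L I z (lsubst a p)) ((\<lambda>l. cp_class L I z (lsubst (A l) p)) ` \<Lambda>)"
proof (rule least_UpperI)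
  show "x \<sqsubseteq>\<^bsub>coprod0 L I z\<^esub> cp_class L I z (lsubst a p)"
    if "x \<in> (\<lambda>l. cp_class L I z (lsubst (A l) p)) ` \<Lambda>" for x
    using that wle_lsubst_mono[OF A_in a_in A_le_a p]
    by (auto simp: cp_class_le_iff lsubst_in_cp_gens[OF A_in p] lsubst_in_cp_gens[OF a_in p])
  show "cp_class L I z (lsubst a p) \<sqsubseteq>\<^bsub>coprod0 L I z\<^esub> Y"
    if Y: "Y \<in> Upper (coprod0 L I z) ((\<lambda>l. cp_class L I z (lsubst (A l) p)) ` \<Lambda>)" for Y
  proof -
    obtain q where q: "Y = cp_class L I z q" "set_lterm q \<subseteq> cp_gens L I z"
      using Y by (auto simp: Upper_def coprod0_def)
    have sub: "(\<lambda>l. cp_class L I z (lsubst (A l) p)) ` \<Lambda> \<subseteq> carrier (coprod0 L I z)"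
      using lsubst_in_cp_gens[OF A_in p] cp_class_in_carrier by blast
    have "wle (lsubst (A l) p) q" if l: "l \<in> \<Lambda>" for l
    proof -
      have "cp_class L I z (lsubst (A l) p) \<sqsubseteq>\<^bsub>coprod0 L I z\<^esub> cp_class L I z q"
        using Upper_memD[OF Y imageI[OF l] sub] q(1) by simp
      then show ?thesis using cp_class_le_iff[OF lsubst_in_cp_gens[OF A_in[OF l] p] q(2)] by simp
    qed
    then have "wle (lsubst a p) q" by (rule wle_lsubst_sup[OF p cofinal_self])
    then show ?thesis using q lsubst_in_cp_gens[OF a_in p] by (simp add: cp_class_le_iff)
  qed
qed (use cp_class_in_carrier lsubst_in_cp_gens[OF A_in p] lsubst_in_cp_gens[OF a_in p] in auto)

end

theorem lemma4p4:
  fixes L :: "'i \<Rightarrow> 'a gorder" and I :: "'i set" and z :: 'a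
    and \<Lambda> :: "'l::order set" and A :: "'l \<Rightarrow> ('i \<times> nat \<Rightarrow> 'a)"
    and a :: "'i \<times> nat \<Rightarrow> 'a" and p :: "('i \<times> nat) lterm"
  assumes lat: "\<forall>i\<in>I. lattice (L i)"
    and zero: "\<forall>i\<in>I. z \<in> carrier (L i) \<and> (\<forall>x\<in>carrier (L i). z \<sqsubseteq>\<^bsub>L i\<^esub> x)"
    and uc: "\<forall>i\<in>I. upper_continuous (L i)"
    and disj: "\<forall>i\<in>I. \<forall>j\<in>I. i \<noteq> j \<longrightarrow> carrier (L i) \<inter> carrier (L j) = {z}"
    and dir: "\<Lambda> \<noteq> {}" "\<forall>l\<in>\<Lambda>. \<forall>m\<in>\<Lambda>. \<exists>k\<in>\<Lambda>. l \<le> k \<and> m \<le> k"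
    and A_in: "\<forall>l\<in>\<Lambda>. A l \<in> carrier (prodL L I)"
    and iso: "\<forall>l\<in>\<Lambda>. \<forall>m\<in>\<Lambda>. l \<le> m \<longrightarrow> A l \<sqsubseteq>\<^bsub>prodL L I\<^esub> A m"
    and a_in: "a \<in> carrier (prodL L I)"
    and a_sup: "is_lub (prodL L I) a (A ` \<Lambda>)"
    and p_vars: "set_lterm p \<subseteq> I \<times> UNIV"
  shows "is_lub (coprod0 L I z) (cp_class L I z (lsubst a p))
           ((\<lambda>l. cp_class L I z (lsubst (A l) p)) ` \<Lambda>)"
proof -
  have "I \<noteq> {}" using p_vars set_lterm_nonempty[of p] by auto
  then interpret isotone_family L I z \<Lambda> A a
    by (intro isotone_family.intro lattice_family.intro directed_set.intro isotone_family_axioms.intro)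
      (use lat zero uc disj dir A_in iso a_in a_sup in auto)
  show ?thesis by (rule coprod0_lub[OF p_vars])
qed

end
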